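(* Let $\mathfrak{X}=(X,\{R_i\}_{i=0}^{4})$ be a commutative association scheme with $R_3^\top=R_4$ and $R_i^\top=R_i$ for $0\le i\le 2$, with primitive idempotents $E_0,E_1,E_2,E_3,E_4$. Let its symmetrization $\tilde{\mathfrak X}=(X,\{R_0,R_1,R_2,R_3\cup R_4\})$ be amorphic, with primitive idempotents $\tilde E_0,\dots,\tilde E_3$ numbered so that, writing $\tilde A_i$ for the adjacency matrix of the $i$-th relation of $\tilde{\mathfrak X}$ and $k_i$ for its valency, $\tilde A_i\tilde E_0=k_i\tilde E_0$, $\tilde A_i\tilde E_i=b_i\tilde E_i$, $\tilde A_i\tilde E_j=a_i\tilde E_j$ for $1\le j\le 3$, $j\ne i$, with $a_i\ne b_i$. If $\tilde{E}_3\notin\{E_1,E_2,E_3,E_4\}$, then the digraph $(X,R_i\cup R_3)$ has $5$ distinct eigenvalues for each $i\in\{1,2\}$.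
   Context: Association scheme: finite set $X$ with a partition of $X\times X$ into relations $R_0$ (diagonal), $R_1,\dots$, closed under transposition, with constant intersection numbers; commutative if these are symmetric in the lower indices. Adjacency matrices are the $01$-matrices of the relations; primitive idempotents $E_0=J/|X|,\dots$ of the Bose–Mesner algebra satisfy $A_iE_j\in\mathbb C E_j$. A symmetric scheme is amorphic if merging the nondiagonal relations along any partition of their index set into nonempty parts gives an association scheme. Eigenvalues of a digraph $(X,R)$ are those of its $01$ adjacency matrix. *)

theory Defs
  imports "Jordan_Normal_Form.Char_Poly"
begin

definition assoc_scheme :: "nat \<Rightarrow> nat \<Rightarrow> (nat \<Rightarrow> (nat \<times> nat) set) \<Rightarrow> bool" where
  "assoc_scheme n d R \<longleftrightarrow>
     0 < n \<and>
     R 0 = {(x, x) | x. x < n} \<and>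
     (\<forall>i\<le>d. R i \<noteq> {} \<and> R i \<subseteq> {0..<n} \<times> {0..<n}) \<and>
     (\<forall>x<n. \<forall>y<n. \<exists>!i. i \<le> d \<and> (x, y) \<in> R i) \<and>
     (\<forall>i\<le>d. \<exists>j\<le>d. (R i)\<inverse> = R j) \<and>
     (\<forall>i\<le>d. \<forall>j\<le>d. \<forall>k\<le>d. \<exists>p::nat. \<forall>x y. (x, y) \<in> R k \<longrightarrow>
         card {z. z < n \<and> (x, z) \<in> R i \<and> (z, y) \<in> R j} = p)"

definition commutative_scheme :: "nat \<Rightarrow> nat \<Rightarrow> (nat \<Rightarrow> (nat \<times> nat) set) \<Rightarrow> bool" where
  "commutative_scheme n d R \<longleftrightarrow> assoc_scheme n d R \<and>
     (\<forall>i\<le>d. \<forall>j\<le>d. \<forall>x<n. \<forall>y<n.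
        card {z. z < n \<and> (x, z) \<in> R i \<and> (z, y) \<in> R j}
      = card {z. z < n \<and> (x, z) \<in> R j \<and> (z, y) \<in> R i})"

definition symmetric_scheme :: "nat \<Rightarrow> nat \<Rightarrow> (nat \<Rightarrow> (nat \<times> nat) set) \<Rightarrow> bool" where
  "symmetric_scheme n d R \<longleftrightarrow> assoc_scheme n d R \<and> (\<forall>i\<le>d. (R i)\<inverse> = R i)"

text \<open>Merging the nondiagonal relations along a partition of {1..d} into m nonempty parts,
  the partition being given by a surjection f from {1..d} onto {1..m}.\<close>

definition merge_rel :: "(nat \<Rightarrow> (nat \<times> nat) set) \<Rightarrow> nat \<Rightarrow> (nat \<Rightarrow> nat) \<Rightarrow> nat \<Rightarrow> (nat \<times> nat) set" where
  "merge_rel R d f l = (if l = 0 then R 0 else \<Union>{R i | i. 1 \<le> i \<and> i \<le> d \<and> f i = l})"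

definition amorphic :: "nat \<Rightarrow> nat \<Rightarrow> (nat \<Rightarrow> (nat \<times> nat) set) \<Rightarrow> bool" where
  "amorphic n d R \<longleftrightarrow> symmetric_scheme n d R \<and>
     (\<forall>m f. f ` {1..d} = {1..m} \<longrightarrow> assoc_scheme n m (merge_rel R d f))"

definition adj_mat :: "nat \<Rightarrow> (nat \<times> nat) set \<Rightarrow> complex mat" where
  "adj_mat n S = mat n n (\<lambda>(x, y). if (x, y) \<in> S then 1 else 0)"

definition all_ones :: "nat \<Rightarrow> complex mat" where
  "all_ones n = mat n n (\<lambda>_. 1)"

definition valency :: "nat \<Rightarrow> (nat \<times> nat) set \<Rightarrow> nat" where
  "valency n S = card {y. y < n \<and> (0, y) \<in> S}"

definition bose_mesner :: "nat \<Rightarrow> nat \<Rightarrow> (nat \<Rightarrow> (nat \<times> nat) set) \<Rightarrow> complex mat set" where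
  "bose_mesner n d R = {M. \<exists>c :: nat \<Rightarrow> complex.
      M = mat n n (\<lambda>(x, y). \<Sum>i\<le>d. c i * (if (x, y) \<in> R i then 1 else 0))}"

definition primitive_idempotent :: "nat \<Rightarrow> nat \<Rightarrow> (nat \<Rightarrow> (nat \<times> nat) set) \<Rightarrow> complex mat \<Rightarrow> bool" where
  "primitive_idempotent n d R E \<longleftrightarrow>
     E \<in> bose_mesner n d R \<and> E * E = E \<and> E \<noteq> 0\<^sub>m n n \<and>
     (\<forall>F \<in> bose_mesner n d R. F * F = F \<and> E * F = F \<longrightarrow> F = 0\<^sub>m n n \<or> F = E)"

definition prim_idempotents :: "nat \<Rightarrow> nat \<Rightarrow> (nat \<Rightarrow> (nat \<times> nat) set) \<Rightarrow> (nat \<Rightarrow> complex mat) \<Rightarrow> bool" where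
  "prim_idempotents n d R E \<longleftrightarrow>
     E 0 = (1 / of_nat n) \<cdot>\<^sub>m all_ones n \<and>
     inj_on E {0..d} \<and>
     (\<forall>j\<le>d. primitive_idempotent n d R (E j)) \<and>
     (\<forall>F. primitive_idempotent n d R F \<longrightarrow> (\<exists>j\<le>d. F = E j))"

definition symmetrization :: "(nat \<Rightarrow> (nat \<times> nat) set) \<Rightarrow> nat \<Rightarrow> (nat \<times> nat) set" where
  "symmetrization R l = (if l = 3 then R 3 \<union> R 4 else R l)"

end

theory Submission
  imports Defs
begin

text \<open>
  Each primitive idempotent Et m of the symmetrization lies in the Bose--Mesner algebra of the
  scheme, hence is the sum of the E j in its block, those with Et m * E j = E j. Since Et 0 = E 0
  and Et 3 is none of the E j, the blocks have sizes 1, 1, 1, 2. Transposition permutes the E j and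
  fixes every block; it fixes the singleton blocks pointwise and, because A 4 = A 3 transposed
  differs from A 3, swaps the two members of the last block. Writing theta l m for the eigenvalue
  of the l-th symmetrized class on Et m, A 3 acts on a singleton block m by the real number
  theta 3 m / 2, and on the last block by a pair of complex conjugate non-real
  numbers. The matrix A i + A 3 of R i \<union> R 3 thus has the eigenvalues theta i m + theta 3 m / 2
  (m = 0, 1, 2), which are real, and two distinct non-real ones. The numbering of the Et m separates
  the real eigenvalues for m = 1, 2; if the one for m = 0 agreed with another, both R i and R 3
  would have their valency as eigenvalue on a nontrivial idempotent, and amorphy forbids this:
  merging classes would turn R i, R 3 and R i \<union> R 3 into unions of cliques.
\<close>

section \<open>Matrices\<close>

lemma index_mult_mat_sum:
  assumes "A \<in> carrier_mat n n" "B \<in> carrier_mat n n" "x < n" "y < n"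
  shows "(A * B) $$ (x, y) = (\<Sum>z<n. A $$ (x, z) * B $$ (z, y))"
  using assms by (simp add: scalar_prod_def lessThan_atLeast0)

lemma eq_square_matI:
  assumes "A \<in> carrier_mat n n" "B \<in> carrier_mat n n"
    and "\<And>x y. x < n \<Longrightarrow> y < n \<Longrightarrow> A $$ (x, y) = B $$ (x, y)"
  shows "A = B"
  using assms by (intro eq_matI) auto

lemma nonzero_mat_obtain_entry:
  assumes "A \<in> carrier_mat n n" "A \<noteq> 0\<^sub>m n n"
  obtains x y where "x < n" "y < n" "A $$ (x, y) \<noteq> 0"
proof -
  have "\<exists>x<n. \<exists>y<n. A $$ (x, y) \<noteq> 0"
  proof (rule ccontr)
    assume "\<not> ?thesis"
    hence "A = 0\<^sub>m n n" using assms(1) by (intro eq_square_matI) auto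
    with assms(2) show False by simp
  qed
  thus thesis using that by blast
qed

lemma smult_smult_mat: "(a :: 'a :: semigroup_mult) \<cdot>\<^sub>m (b \<cdot>\<^sub>m M) = (a * b) \<cdot>\<^sub>m M"
  by (intro eq_matI) (auto simp: mult.assoc)

lemma one_smult_mat: "(1 :: 'a :: monoid_mult) \<cdot>\<^sub>m M = M"
  by (intro eq_matI) auto

lemma transpose_smult_mat: "transpose_mat (c \<cdot>\<^sub>m M) = c \<cdot>\<^sub>m transpose_mat M"
  by (intro eq_matI) auto

lemma smult_mat_cancel:
  assumes "F \<in> carrier_mat n n" "F \<noteq> 0\<^sub>m n n" "(a :: 'a :: idom) \<cdot>\<^sub>m F = b \<cdot>\<^sub>m F"
  shows "a = b"
proof -
  obtain x y where xy: "x < n" "y < n" "F $$ (x, y) \<noteq> 0"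
    using nonzero_mat_obtain_entry[OF assms(1,2)] by blast
  have "a * F $$ (x, y) = b * F $$ (x, y)"
    using assms(1,3) xy by (metis index_smult_mat(1) carrier_matD)
  thus ?thesis using xy(3) by simp
qed

lemma adj_mat_carrier [simp]: "adj_mat n Q \<in> carrier_mat n n"
  and dim_adj_mat [simp]: "dim_row (adj_mat n Q) = n" "dim_col (adj_mat n Q) = n"
  by (simp_all add: adj_mat_def)

lemma index_adj_mat [simp]:
  "x < n \<Longrightarrow> y < n \<Longrightarrow> adj_mat n Q $$ (x, y) = (if (x, y) \<in> Q then 1 else 0)"
  by (simp add: adj_mat_def)

lemma all_ones_carrier [simp]: "all_ones n \<in> carrier_mat n n"
  by (simp add: all_ones_def)

lemma adj_mat_converse: "adj_mat n (Q\<inverse>) = transpose_mat (adj_mat n Q)"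
  by (intro eq_matI) auto

lemma adj_mat_Un:
  assumes "Q \<inter> Q' = {}"
  shows "adj_mat n (Q \<union> Q') = adj_mat n Q + adj_mat n Q'"
  using assms by (intro eq_matI) auto

lemma sum_indicator_card:
  "(\<Sum>y<n. (if P y then 1 else 0) :: complex) = of_nat (card {y. y < (n::nat) \<and> P y})"
proof -
  have "(\<Sum>y<n. (if P y then 1 else 0) :: complex) = (\<Sum>y\<in>{y. y < n \<and> P y}. 1)"
    by (rule sum.mono_neutral_cong_right) auto
  thus ?thesis by simp
qed

lemma sum_indicator_mult_card:
  "(\<Sum>y<n. (if (x, y) \<in> Q then 1 else 0) * (if (y, z) \<in> Q' then 1 else 0) :: complex)
   = of_nat (card {y. y < (n::nat) \<and> (x, y) \<in> Q \<and> (y, z) \<in> Q'})"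
proof -
  have "(\<Sum>y<n. (if (x, y) \<in> Q then 1 else 0) * (if (y, z) \<in> Q' then 1 else 0) :: complex)
     = (\<Sum>y<n. if (x, y) \<in> Q \<and> (y, z) \<in> Q' then 1 else 0)"
    by (rule sum.cong) auto
  thus ?thesis by (simp add: sum_indicator_card)
qed

lemma index_adj_mat_mult_adj_mat:
  assumes "x < n" "y < n"
  shows "(adj_mat n Q * adj_mat n Q') $$ (x, y)
    = of_nat (card {z. z < n \<and> (x, z) \<in> Q \<and> (z, y) \<in> Q'})"
proof -
  have "(adj_mat n Q * adj_mat n Q') $$ (x, y)
      = (\<Sum>z<n. adj_mat n Q $$ (x, z) * adj_mat n Q' $$ (z, y))"
    using assms by (intro index_mult_mat_sum) auto
  also have "\<dots> = (\<Sum>z<n. if (x, z) \<in> Q \<and> (z, y) \<in> Q' then 1 else 0)"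
    using assms by (intro sum.cong) auto
  finally show ?thesis by (simp add: sum_indicator_card)
qed

lemma adj_mat_mult_col:
  assumes "F \<in> carrier_mat n n" "adj_mat n Q * F = c \<cdot>\<^sub>m F" "x < n" "y < n"
  shows "(\<Sum>z<n. (if (x, z) \<in> Q then 1 else 0) * F $$ (z, y)) = c * F $$ (x, y)"
proof -
  have "(adj_mat n Q * F) $$ (x, y) = (\<Sum>z<n. adj_mat n Q $$ (x, z) * F $$ (z, y))"
    using assms by (intro index_mult_mat_sum) auto
  also have "\<dots> = (\<Sum>z<n. (if (x, z) \<in> Q then 1 else 0) * F $$ (z, y))"
    using assms by (intro sum.cong) auto
  finally show ?thesis using assms by simp
qed

lemma sum_mult_mat_assoc:
  assumes "A \<in> carrier_mat n n" "B \<in> carrier_mat n n" "x < n"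
  shows "(\<Sum>z<n. (A * B) $$ (x, z) * v z) = (\<Sum>y<n. A $$ (x, y) * (\<Sum>z<n. B $$ (y, z) * v z))"
proof -
  have "(\<Sum>z<n. (A * B) $$ (x, z) * v z) = (\<Sum>z<n. \<Sum>y<n. A $$ (x, y) * B $$ (y, z) * v z)"
    using assms by (intro sum.cong refl)
      (simp add: index_mult_mat_sum[OF assms(1,2)] sum_distrib_right del: index_mult_mat)
  also have "\<dots> = (\<Sum>y<n. A $$ (x, y) * (\<Sum>z<n. B $$ (y, z) * v z))"
    by (subst sum.swap) (simp add: sum_distrib_left mult.assoc)
  finally show ?thesis .
qed

lemma eigenvalueI_mult_smult:
  assumes M: "M \<in> carrier_mat n n" and F: "F \<in> carrier_mat n n" "F \<noteq> 0\<^sub>m n n"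
    and MF: "M * F = c \<cdot>\<^sub>m F"
  shows "eigenvalue M c"
proof -
  obtain x y where xy: "x < n" "y < n" "F $$ (x, y) \<noteq> 0"
    using nonzero_mat_obtain_entry[OF F] by blast
  have v: "col F y \<in> carrier_vec n" using F by auto
  have "col F y \<noteq> 0\<^sub>v n"
    using xy F by (metis carrier_matD index_col index_zero_vec(1))
  moreover have "M *\<^sub>v col F y = c \<cdot>\<^sub>v col F y"
  proof
    fix i assume "i < dim_vec (c \<cdot>\<^sub>v col F y)"
    hence i: "i < n" using F by simp
    have "(M *\<^sub>v col F y) $ i = (M * F) $$ (i, y)" using M F i xy by simp
    thus "(M *\<^sub>v col F y) $ i = (c \<cdot>\<^sub>v col F y) $ i" using MF F i xy by simp
  qed (use M F in simp)
  ultimately show ?thesis unfolding eigenvalue_def eigenvector_def using v M by auto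
qed

lemma eigenvalue_obtain_vector:
  assumes M: "M \<in> carrier_mat n n" and "eigenvalue M \<mu>"
  obtains v where "\<exists>x<n. v x \<noteq> 0" "\<And>x. x < n \<Longrightarrow> (\<Sum>z<n. M $$ (x, z) * v z) = \<mu> * v x"
proof -
  obtain v where v: "v \<in> carrier_vec n" "v \<noteq> 0\<^sub>v n" "M *\<^sub>v v = \<mu> \<cdot>\<^sub>v v"
    using assms unfolding eigenvalue_def eigenvector_def by auto
  have "\<exists>x<n. v $ x \<noteq> 0"
  proof (rule ccontr)
    assume "\<not> ?thesis"
    hence "v = 0\<^sub>v n" using v(1) by (intro eq_vecI) auto
    thus False using v(2) by simp
  qed
  moreover have "(\<Sum>z<n. M $$ (x, z) * v $ z) = \<mu> * v $ x" if x: "x < n" for x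
  proof -
    have "(M *\<^sub>v v) $ x = (\<Sum>z<n. M $$ (x, z) * v $ z)"
      using M v(1) x by (simp add: scalar_prod_def lessThan_atLeast0)
    thus ?thesis using v(3) x v(1) by simp
  qed
  ultimately show thesis using that[of "\<lambda>x. v $ x"] by blast
qed

lemma eigenvalue_in_resolution:
  fixes E :: "nat \<Rightarrow> complex mat"
  assumes M: "M \<in> carrier_mat n n" and ev: "eigenvalue M \<mu>"
    and E: "\<And>j. j \<le> d \<Longrightarrow> E j \<in> carrier_mat n n"
    and sum_E: "\<And>x y. x < n \<Longrightarrow> y < n \<Longrightarrow> (\<Sum>j\<le>d. E j $$ (x, y)) = (if x = y then 1 else 0)"
    and ME: "\<And>j. j \<le> d \<Longrightarrow> M * E j = ev j \<cdot>\<^sub>m E j"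
    and EM: "\<And>j. j \<le> d \<Longrightarrow> E j * M = M * E j"
  shows "\<exists>j\<le>d. \<mu> = ev j"
proof -
  obtain v where v: "\<exists>x<n. v x \<noteq> 0" "\<And>x. x < n \<Longrightarrow> (\<Sum>z<n. M $$ (x, z) * v z) = \<mu> * v x"
    using eigenvalue_obtain_vector[OF M ev] by blast
  define w where "w j x = (\<Sum>z<n. E j $$ (x, z) * v z)" for j x
  have sum_w: "(\<Sum>j\<le>d. w j x) = v x" if x: "x < n" for x
  proof -
    have "(\<Sum>j\<le>d. w j x) = (\<Sum>z<n. (\<Sum>j\<le>d. E j $$ (x, z)) * v z)"
      unfolding w_def by (subst sum.swap) (simp add: sum_distrib_right)
    also have "\<dots> = (\<Sum>z<n. if z = x then v x else 0)"
      using sum_E x by (intro sum.cong refl) auto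
    finally show ?thesis using x by simp
  qed
  obtain j x where jx: "j \<le> d" "x < n" "w j x \<noteq> 0"
  proof -
    obtain x where x: "x < n" "v x \<noteq> 0" using v(1) by blast
    hence "(\<Sum>j\<le>d. w j x) \<noteq> 0" using sum_w by simp
    then obtain j where "j \<le> d" "w j x \<noteq> 0" by (meson atMost_iff sum.neutral)
    thus ?thesis using that x by blast
  qed
  have "(\<Sum>z<n. (M * E j) $$ (x, z) * v z) = ev j * w j x"
    using ME[OF jx(1)] jx E[OF jx(1)] unfolding w_def by (simp add: sum_distrib_left mult.assoc)
  moreover have "(\<Sum>z<n. (E j * M) $$ (x, z) * v z) = \<mu> * w j x"
    using v(2) unfolding sum_mult_mat_assoc[OF E[OF jx(1)] M jx(2)] w_def
    by (simp add: sum_distrib_left mult_ac)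
  ultimately have "ev j * w j x = \<mu> * w j x" using EM[OF jx(1)] by simp
  thus ?thesis using jx by auto
qed

lemma real_mat_eigenvalues_transpose_cnj:
  fixes A :: "nat \<Rightarrow> nat \<Rightarrow> complex"
  assumes real: "\<And>x z. cnj (A x z) = A x z"
    and Av: "\<And>x. x < n \<Longrightarrow> (\<Sum>z<n. A x z * v z) = \<alpha> * v x"
    and ATv: "\<And>x. x < n \<Longrightarrow> (\<Sum>z<n. A z x * v z) = \<beta> * v x"
    and nz: "\<exists>x<n. v x \<noteq> 0"
  shows "\<alpha> = cnj \<beta>"
proof -
  define N where "N = (\<Sum>x<n. cnj (v x) * v x)"
  have "cnj (v x) * v x = of_real ((cmod (v x))\<^sup>2)" for x
    by (metis complex_norm_square mult.commute)
  hence N_real: "N = of_real (\<Sum>x<n. (cmod (v x))\<^sup>2)" unfolding N_def by simp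
  obtain x0 where x0: "x0 < n" "v x0 \<noteq> 0" using nz by blast
  have "0 < (cmod (v x0))\<^sup>2" using x0 by simp
  also have "\<dots> \<le> (\<Sum>x<n. (cmod (v x))\<^sup>2)" using x0 by (intro member_le_sum) auto
  finally have "N \<noteq> 0" unfolding N_real by (metis of_real_eq_0_iff less_irrefl)
  have "(\<Sum>x<n. cnj (v x) * (\<Sum>z<n. A x z * v z)) = (\<Sum>x<n. \<Sum>z<n. cnj (v x) * A x z * v z)"
    by (simp add: sum_distrib_left mult.assoc)
  also have "\<dots> = (\<Sum>z<n. \<Sum>x<n. cnj (v x) * A x z * v z)" by (rule sum.swap)
  also have "\<dots> = (\<Sum>z<n. cnj (\<Sum>x<n. A x z * v x) * v z)"
    by (simp add: sum_distrib_right sum_distrib_left real mult_ac)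
  finally have "(\<Sum>x<n. cnj (v x) * (\<Sum>z<n. A x z * v z)) = (\<Sum>z<n. cnj (\<Sum>x<n. A x z * v x) * v z)" .
  moreover have "(\<Sum>x<n. cnj (v x) * (\<Sum>z<n. A x z * v z)) = \<alpha> * N"
    unfolding N_def using Av by (simp add: sum_distrib_left mult_ac)
  moreover have "(\<Sum>z<n. cnj (\<Sum>x<n. A x z * v x) * v z) = cnj \<beta> * N"
    unfolding N_def using ATv by (simp add: sum_distrib_left mult_ac)
  ultimately show ?thesis using \<open>N \<noteq> 0\<close> by simp
qed

lemma eigenvalue_norm_le_row_sum:
  fixes A :: "nat \<Rightarrow> nat \<Rightarrow> complex"
  assumes A01: "\<And>x z. A x z = 0 \<or> A x z = 1"
    and row_sum: "\<And>x. x < n \<Longrightarrow> (\<Sum>z<n. A x z) = of_real K"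
    and Av: "\<And>x. x < n \<Longrightarrow> (\<Sum>z<n. A x z * v z) = \<theta> * v x"
    and nz: "\<exists>x<n. v x \<noteq> 0"
  shows "cmod \<theta> \<le> K"
proof -
  have "n > 0" using nz by auto
  define m where "m = Max ((\<lambda>z. cmod (v z)) ` {..<n})"
  have "m \<in> (\<lambda>z. cmod (v z)) ` {..<n}" unfolding m_def using \<open>n > 0\<close> by (intro Max_in) auto
  then obtain x where x: "x < n" "cmod (v x) = m" by auto
  have m_ge: "cmod (v z) \<le> m" if "z < n" for z unfolding m_def using that by (intro Max_ge) auto
  have "m > 0"
  proof -
    obtain y where y: "y < n" "v y \<noteq> 0" using nz by blast
    have "0 < cmod (v y)" using y by simp
    also have "\<dots> \<le> m" using m_ge y by simp
    finally show ?thesis .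
  qed
  have "cmod \<theta> * m = cmod (\<Sum>z<n. A x z * v z)" using Av x by (simp add: norm_mult)
  also have "\<dots> \<le> (\<Sum>z<n. cmod (A x z * v z))" by (rule norm_sum)
  also have "\<dots> \<le> (\<Sum>z<n. Re (A x z) * m)"
  proof (rule sum_mono)
    fix z assume z: "z \<in> {..<n}"
    have "cmod (A x z) = Re (A x z)" using A01[of x z] by auto
    hence "cmod (A x z * v z) = Re (A x z) * cmod (v z)" by (simp add: norm_mult)
    also have "\<dots> \<le> Re (A x z) * m" using m_ge z A01[of x z] by (auto intro: mult_left_mono)
    finally show "cmod (A x z * v z) \<le> Re (A x z) * m" .
  qed
  also have "\<dots> = Re (\<Sum>z<n. A x z) * m" by (simp add: sum_distrib_right)
  also have "\<dots> = K * m" using row_sum x by simp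
  finally show ?thesis using \<open>m > 0\<close> by simp
qed

section \<open>Association schemes and the Bose--Mesner algebra\<close>

locale association_scheme =
  fixes n d :: nat and R :: "nat \<Rightarrow> (nat \<times> nat) set"
  assumes scheme: "assoc_scheme n d R"
begin

lemma n_pos: "0 < n"
  using scheme unfolding assoc_scheme_def by (elim conjE) assumption

lemma R0: "R 0 = {(x, x) | x. x < n}"
  using scheme unfolding assoc_scheme_def by (elim conjE) assumption

lemma rel_nonempty_in_range: "\<forall>i\<le>d. R i \<noteq> {} \<and> R i \<subseteq> {0..<n} \<times> {0..<n}"
  using scheme unfolding assoc_scheme_def by (elim conjE) assumption

lemma ex1_rel_all: "\<forall>x<n. \<forall>y<n. \<exists>!i. i \<le> d \<and> (x, y) \<in> R i"
  using scheme unfolding assoc_scheme_def by (elim conjE) assumption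

lemma converse_rel_all: "\<forall>i\<le>d. \<exists>j\<le>d. (R i)\<inverse> = R j"
  using scheme unfolding assoc_scheme_def by (elim conjE) assumption

lemma intersection_number_all: "\<forall>i\<le>d. \<forall>j\<le>d. \<forall>k\<le>d. \<exists>p::nat. \<forall>x y. (x, y) \<in> R k \<longrightarrow>
     card {z. z < n \<and> (x, z) \<in> R i \<and> (z, y) \<in> R j} = p"
  using scheme unfolding assoc_scheme_def by (elim conjE) assumption

lemma rel_nonempty: "i \<le> d \<Longrightarrow> R i \<noteq> {}"
  using rel_nonempty_in_range by blast

lemma rel_in_range: "i \<le> d \<Longrightarrow> (x, y) \<in> R i \<Longrightarrow> x < n \<and> y < n"
  using rel_nonempty_in_range by fastforce

lemma ex1_rel: "x < n \<Longrightarrow> y < n \<Longrightarrow> \<exists>!i. i \<le> d \<and> (x, y) \<in> R i"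
  using ex1_rel_all by blast

lemma rel_unique: "a \<le> d \<Longrightarrow> b \<le> d \<Longrightarrow> (x, y) \<in> R a \<Longrightarrow> (x, y) \<in> R b \<Longrightarrow> a = b"
  using ex1_rel rel_in_range by blast

lemma rel_disjoint:
  assumes "a \<le> d" "b \<le> d" "a \<noteq> b"
  shows "R a \<inter> R b = {}"
proof (rule equals0I)
  fix p assume "p \<in> R a \<inter> R b"
  thus False using rel_unique[OF assms(1,2), of "fst p" "snd p"] assms(3) by simp
qed

lemma irrefl_rel: "0 < i \<Longrightarrow> i \<le> d \<Longrightarrow> (x, x) \<notin> R i"
proof
  assume "0 < i" "i \<le> d" "(x, x) \<in> R i"
  moreover have "(x, x) \<in> R 0" using R0 rel_in_range[of i x x] calculation by auto
  ultimately show False using rel_unique[of i 0 x x] by simp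
qed

lemma converse_rel: "i \<le> d \<Longrightarrow> \<exists>j\<le>d. (R i)\<inverse> = R j"
  using converse_rel_all by blast

lemma intersection_numbers:
  "\<exists>p. \<forall>i\<le>d. \<forall>j\<le>d. \<forall>k\<le>d. \<forall>x y. (x, y) \<in> R k \<longrightarrow>
     card {z. z < n \<and> (x, z) \<in> R i \<and> (z, y) \<in> R j} = p i j k"
proof -
  define p where "p i j k = (SOME p. \<forall>x y. (x, y) \<in> R k \<longrightarrow>
    card {z. z < n \<and> (x, z) \<in> R i \<and> (z, y) \<in> R j} = p)" for i j k
  have "card {z. z < n \<and> (x, z) \<in> R i \<and> (z, y) \<in> R j} = p i j k"
    if "i \<le> d" "j \<le> d" "k \<le> d" "(x, y) \<in> R k" for i j k x y
    using someI_ex[OF intersection_number_all[rule_format, OF that(1-3)]] that(4) unfolding p_def by blast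
  thus ?thesis by (intro exI[of _ p]) blast
qed

abbreviation BM where "BM \<equiv> bose_mesner n d R"

definition rel_ind :: "nat \<Rightarrow> nat \<Rightarrow> nat \<Rightarrow> complex" where
  "rel_ind k x y = (if (x, y) \<in> R k then 1 else 0)"

lemma sum_rel_ind:
  assumes "x < n" "y < n" "k \<le> d" "(x, y) \<in> R k"
  shows "(\<Sum>i\<le>d. c i * rel_ind i x y) = c k"
proof -
  have "(\<Sum>i\<le>d. c i * rel_ind i x y) = (\<Sum>i\<le>d. if i = k then c k else 0)"
    using ex1_rel[OF assms(1,2)] assms(3,4) by (intro sum.cong) (auto simp: rel_ind_def)
  thus ?thesis using assms(3) by simp
qed

lemma BM_carrier: "X \<in> BM \<Longrightarrow> X \<in> carrier_mat n n"
  by (auto simp: bose_mesner_def)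

lemma BM_obtain_coeffs:
  assumes "X \<in> BM"
  obtains c where "\<And>x y. x < n \<Longrightarrow> y < n \<Longrightarrow> X $$ (x, y) = (\<Sum>i\<le>d. c i * rel_ind i x y)"
  using assms by (auto simp: bose_mesner_def rel_ind_def)

lemma BM_I:
  assumes "X \<in> carrier_mat n n"
    and "\<And>x y. x < n \<Longrightarrow> y < n \<Longrightarrow> X $$ (x, y) = (\<Sum>i\<le>d. c i * rel_ind i x y)"
  shows "X \<in> BM"
proof -
  have "X = mat n n (\<lambda>(x, y). \<Sum>i\<le>d. c i * (if (x, y) \<in> R i then 1 else 0))"
    using assms by (intro eq_square_matI) (auto simp: rel_ind_def)
  thus ?thesis unfolding bose_mesner_def by blast
qed

lemma BM_I_classwise:
  assumes "X \<in> carrier_mat n n"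
    and "\<And>k x y. k \<le> d \<Longrightarrow> (x, y) \<in> R k \<Longrightarrow> X $$ (x, y) = c k"
  shows "X \<in> BM"
proof (rule BM_I[OF assms(1)])
  fix x y assume xy: "x < n" "y < n"
  then obtain k where "k \<le> d" "(x, y) \<in> R k" using ex1_rel by blast
  thus "X $$ (x, y) = (\<Sum>i\<le>d. c i * rel_ind i x y)" using assms(2) sum_rel_ind xy by simp
qed

lemma index_mult_BM:
  assumes X: "X \<in> carrier_mat n n" and Y: "Y \<in> carrier_mat n n"
    and cX: "\<And>x y. x < n \<Longrightarrow> y < n \<Longrightarrow> X $$ (x, y) = (\<Sum>i\<le>d. c i * rel_ind i x y)"
    and eY: "\<And>x y. x < n \<Longrightarrow> y < n \<Longrightarrow> Y $$ (x, y) = (\<Sum>i\<le>d. e i * rel_ind i x y)"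
    and xz: "x < n" "z < n"
  shows "(X * Y) $$ (x, z) = (\<Sum>i\<le>d. \<Sum>j\<le>d. c i * e j *
      of_nat (card {y. y < n \<and> (x, y) \<in> R i \<and> (y, z) \<in> R j}))"
proof -
  have "(X * Y) $$ (x, z) = (\<Sum>y<n. X $$ (x, y) * Y $$ (y, z))"
    using index_mult_mat_sum[OF X Y xz] .
  also have "\<dots> = (\<Sum>y<n. (\<Sum>i\<le>d. c i * rel_ind i x y) * (\<Sum>j\<le>d. e j * rel_ind j y z))"
    using cX eY xz by (intro sum.cong) auto
  also have "\<dots> = (\<Sum>y<n. \<Sum>i\<le>d. \<Sum>j\<le>d. (c i * e j) * (rel_ind i x y * rel_ind j y z))"
    by (simp add: sum_product algebra_simps)
  also have "\<dots> = (\<Sum>i\<le>d. \<Sum>j\<le>d. \<Sum>y<n. (c i * e j) * (rel_ind i x y * rel_ind j y z))"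
    by (subst sum.swap) (rule sum.cong[OF refl], rule sum.swap)
  also have "\<dots> = (\<Sum>i\<le>d. \<Sum>j\<le>d. (c i * e j) * (\<Sum>y<n. rel_ind i x y * rel_ind j y z))"
    by (simp add: sum_distrib_left)
  also have "\<dots> = (\<Sum>i\<le>d. \<Sum>j\<le>d. c i * e j *
      of_nat (card {y. y < n \<and> (x, y) \<in> R i \<and> (y, z) \<in> R j}))"
    unfolding rel_ind_def sum_indicator_mult_card ..
  finally show ?thesis .
qed

lemma BM_mult_closed:
  assumes "X \<in> BM" "Y \<in> BM"
  shows "X * Y \<in> BM"
proof -
  obtain c where c: "\<And>x y. x < n \<Longrightarrow> y < n \<Longrightarrow> X $$ (x, y) = (\<Sum>i\<le>d. c i * rel_ind i x y)"
    using BM_obtain_coeffs[OF assms(1)] by blast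
  obtain e where e: "\<And>x y. x < n \<Longrightarrow> y < n \<Longrightarrow> Y $$ (x, y) = (\<Sum>i\<le>d. e i * rel_ind i x y)"
    using BM_obtain_coeffs[OF assms(2)] by blast
  have X: "X \<in> carrier_mat n n" and Y: "Y \<in> carrier_mat n n" using assms BM_carrier by auto
  obtain p where p: "\<forall>i\<le>d. \<forall>j\<le>d. \<forall>k\<le>d. \<forall>x y. (x, y) \<in> R k \<longrightarrow>
      card {z. z < n \<and> (x, z) \<in> R i \<and> (z, y) \<in> R j} = p i j k"
    using intersection_numbers by blast
  show ?thesis
  proof (rule BM_I_classwise[where c = "\<lambda>k. \<Sum>i\<le>d. \<Sum>j\<le>d. c i * e j * of_nat (p i j k)"])
    show "X * Y \<in> carrier_mat n n" using X Y by auto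
    fix k x z assume k: "k \<le> d" "(x, z) \<in> R k"
    hence xz: "x < n" "z < n" using rel_in_range by auto
    have "(X * Y) $$ (x, z) = (\<Sum>i\<le>d. \<Sum>j\<le>d. c i * e j *
        of_nat (card {y. y < n \<and> (x, y) \<in> R i \<and> (y, z) \<in> R j}))"
      by (rule index_mult_BM[OF X Y c e xz])
    also have "\<dots> = (\<Sum>i\<le>d. \<Sum>j\<le>d. c i * e j * of_nat (p i j k))"
      using p k by (intro sum.cong refl) simp
    finally show "(X * Y) $$ (x, z) = (\<Sum>i\<le>d. \<Sum>j\<le>d. c i * e j * of_nat (p i j k))" .
  qed
qed

lemma BM_add_closed:
  assumes "X \<in> BM" "Y \<in> BM"
  shows "X + Y \<in> BM"
proof -
  obtain c where c: "\<And>x y. x < n \<Longrightarrow> y < n \<Longrightarrow> X $$ (x, y) = (\<Sum>i\<le>d. c i * rel_ind i x y)"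
    using BM_obtain_coeffs[OF assms(1)] by blast
  obtain e where e: "\<And>x y. x < n \<Longrightarrow> y < n \<Longrightarrow> Y $$ (x, y) = (\<Sum>i\<le>d. e i * rel_ind i x y)"
    using BM_obtain_coeffs[OF assms(2)] by blast
  have "X \<in> carrier_mat n n" "Y \<in> carrier_mat n n" using assms BM_carrier by auto
  thus ?thesis
    using c e by (intro BM_I[where c = "\<lambda>i. c i + e i"]) (auto simp: algebra_simps sum.distrib)
qed

lemma adj_mat_BM: "k \<le> d \<Longrightarrow> adj_mat n (R k) \<in> BM"
  by (rule BM_I_classwise[where c = "\<lambda>i. if i = k then 1 else 0"])
    (auto simp: rel_in_range dest: rel_unique)

lemma adj_mat_Un_BM: "a \<le> d \<Longrightarrow> b \<le> d \<Longrightarrow> a \<noteq> b \<Longrightarrow> adj_mat n (R a \<union> R b) \<in> BM"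
  using adj_mat_Un[OF rel_disjoint] BM_add_closed adj_mat_BM by simp

lemma one_mat_BM: "1\<^sub>m n \<in> BM"
proof (rule BM_I_classwise[where c = "\<lambda>i. if i = 0 then 1 else 0"])
  fix k x y assume k: "k \<le> d" "(x, y) \<in> R k"
  moreover have "x = y \<longleftrightarrow> k = 0" using k irrefl_rel[of k x] R0 by auto
  ultimately show "1\<^sub>m n $$ (x, y) = (if k = 0 then 1 else 0)" using rel_in_range by simp
qed simp

lemma BM_transpose_closed:
  assumes "X \<in> BM"
  shows "transpose_mat X \<in> BM"
proof -
  define conv where "conv i = (SOME j. j \<le> d \<and> (R i)\<inverse> = R j)" for i
  have conv: "conv i \<le> d \<and> (R i)\<inverse> = R (conv i)" if "i \<le> d" for i
    unfolding conv_def using someI_ex[OF converse_rel[OF that]] .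
  obtain c where c: "\<And>x y. x < n \<Longrightarrow> y < n \<Longrightarrow> X $$ (x, y) = (\<Sum>i\<le>d. c i * rel_ind i x y)"
    using BM_obtain_coeffs[OF assms] by blast
  have X: "X \<in> carrier_mat n n" using BM_carrier[OF assms] .
  show ?thesis
  proof (rule BM_I_classwise[where c = "\<lambda>k. c (conv k)"])
    show "transpose_mat X \<in> carrier_mat n n" using X by simp
    fix k x y assume k: "k \<le> d" "(x, y) \<in> R k"
    hence xy: "x < n" "y < n" using rel_in_range by auto
    have "(y, x) \<in> R (conv k)" using conv[OF k(1)] k(2) by blast
    hence "X $$ (y, x) = c (conv k)" using c xy sum_rel_ind conv[OF k(1)] by simp
    thus "transpose_mat X $$ (x, y) = c (conv k)" using X xy by simp
  qed
qed

lemma BM_symmetric: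
  assumes sym: "\<And>i. i \<le> d \<Longrightarrow> (R i)\<inverse> = R i" and X: "X \<in> BM"
  shows "transpose_mat X = X"
proof -
  obtain c where c: "\<And>x y. x < n \<Longrightarrow> y < n \<Longrightarrow> X $$ (x, y) = (\<Sum>i\<le>d. c i * rel_ind i x y)"
    using BM_obtain_coeffs[OF X] by blast
  have "rel_ind i y x = rel_ind i x y" if "i \<le> d" for i x y
    using sym[OF that] unfolding rel_ind_def by (metis converse_iff)
  thus ?thesis using BM_carrier[OF X] c by (intro eq_square_matI[where n = n]) auto
qed

end

lemma symmetric_scheme_commutative:
  assumes "symmetric_scheme n d R"
  shows "commutative_scheme n d R"
proof -
  have scheme: "assoc_scheme n d R" and sym: "\<And>i. i \<le> d \<Longrightarrow> (R i)\<inverse> = R i"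
    using assms unfolding symmetric_scheme_def by auto
  interpret association_scheme n d R by (rule association_scheme.intro[OF scheme])
  have flip: "(x, y) \<in> R i \<longleftrightarrow> (y, x) \<in> R i" if "i \<le> d" for i x y
    using sym[OF that] by (metis converse_iff)
  obtain p where p: "\<forall>i\<le>d. \<forall>j\<le>d. \<forall>k\<le>d. \<forall>x y. (x, y) \<in> R k \<longrightarrow>
      card {z. z < n \<and> (x, z) \<in> R i \<and> (z, y) \<in> R j} = p i j k"
    using intersection_numbers by blast
  have "card {z. z < n \<and> (x, z) \<in> R i \<and> (z, y) \<in> R j} = card {z. z < n \<and> (x, z) \<in> R j \<and> (z, y) \<in> R i}"
    if ij: "i \<le> d" "j \<le> d" and xy: "x < n" "y < n" for i j x y
  proof -
    obtain k where k: "k \<le> d" "(x, y) \<in> R k" using ex1_rel[OF xy] by blast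
    hence k': "(y, x) \<in> R k" using flip by blast
    have "card {z. z < n \<and> (x, z) \<in> R i \<and> (z, y) \<in> R j} = p i j k"
      using p[rule_format, OF ij k] .
    also have "\<dots> = card {z. z < n \<and> (y, z) \<in> R i \<and> (z, x) \<in> R j}"
      using p[rule_format, OF ij k(1) k'] by simp
    also have "{z. z < n \<and> (y, z) \<in> R i \<and> (z, x) \<in> R j} = {z. z < n \<and> (x, z) \<in> R j \<and> (z, y) \<in> R i}"
      using flip ij by blast
    finally show ?thesis .
  qed
  thus ?thesis using scheme unfolding commutative_scheme_def by blast
qed

locale comm_scheme =
  fixes n d :: nat and R :: "nat \<Rightarrow> (nat \<times> nat) set"
  assumes commutative: "commutative_scheme n d R"

sublocale comm_scheme \<subseteq> association_scheme
  using commutative unfolding commutative_scheme_def by unfold_locales blast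

context comm_scheme
begin

lemma path_count_commute:
  "i \<le> d \<Longrightarrow> j \<le> d \<Longrightarrow> x < n \<Longrightarrow> y < n \<Longrightarrow>
    card {z. z < n \<and> (x, z) \<in> R i \<and> (z, y) \<in> R j} = card {z. z < n \<and> (x, z) \<in> R j \<and> (z, y) \<in> R i}"
  using commutative unfolding commutative_scheme_def by blast

lemma BM_mult_commute:
  assumes "X \<in> BM" "Y \<in> BM"
  shows "X * Y = Y * X"
proof -
  obtain c where c: "\<And>x y. x < n \<Longrightarrow> y < n \<Longrightarrow> X $$ (x, y) = (\<Sum>i\<le>d. c i * rel_ind i x y)"
    using BM_obtain_coeffs[OF assms(1)] by blast
  obtain e where e: "\<And>x y. x < n \<Longrightarrow> y < n \<Longrightarrow> Y $$ (x, y) = (\<Sum>i\<le>d. e i * rel_ind i x y)"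
    using BM_obtain_coeffs[OF assms(2)] by blast
  have X: "X \<in> carrier_mat n n" and Y: "Y \<in> carrier_mat n n" using assms BM_carrier by auto
  show ?thesis
  proof (rule eq_square_matI)
    show "X * Y \<in> carrier_mat n n" "Y * X \<in> carrier_mat n n" using X Y by auto
    fix x z assume xz: "x < n" "z < n"
    have "(X * Y) $$ (x, z) = (\<Sum>i\<le>d. \<Sum>j\<le>d. c i * e j *
        of_nat (card {y. y < n \<and> (x, y) \<in> R i \<and> (y, z) \<in> R j}))"
      by (rule index_mult_BM[OF X Y c e xz])
    also have "\<dots> = (\<Sum>i\<le>d. \<Sum>j\<le>d. e j * c i *
        of_nat (card {y. y < n \<and> (x, y) \<in> R j \<and> (y, z) \<in> R i}))"
      by (intro sum.cong refl) (simp add: path_count_commute xz mult.commute)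
    also have "\<dots> = (\<Sum>j\<le>d. \<Sum>i\<le>d. e j * c i *
        of_nat (card {y. y < n \<and> (x, y) \<in> R j \<and> (y, z) \<in> R i}))"
      by (rule sum.swap)
    also have "\<dots> = (Y * X) $$ (x, z)"
      by (rule index_mult_BM[OF Y X e c xz, symmetric])
    finally show "(X * Y) $$ (x, z) = (Y * X) $$ (x, z)" .
  qed
qed

end

section \<open>Primitive idempotents\<close>

locale comm_scheme_idempotents = comm_scheme +
  fixes E :: "nat \<Rightarrow> complex mat"
  assumes idempotents: "prim_idempotents n d R E"
begin

lemma E_primitive: "j \<le> d \<Longrightarrow> primitive_idempotent n d R (E j)"
  using idempotents unfolding prim_idempotents_def by blast

lemma E_BM: "j \<le> d \<Longrightarrow> E j \<in> BM"
  using E_primitive unfolding primitive_idempotent_def by blast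

lemma E_idem: "j \<le> d \<Longrightarrow> E j * E j = E j"
  using E_primitive unfolding primitive_idempotent_def by blast

lemma E_nonzero: "j \<le> d \<Longrightarrow> E j \<noteq> 0\<^sub>m n n"
  using E_primitive unfolding primitive_idempotent_def by blast

lemma E_carrier: "j \<le> d \<Longrightarrow> E j \<in> carrier_mat n n"
  using E_BM BM_carrier by blast

lemma E_minimal:
  "j \<le> d \<Longrightarrow> F \<in> BM \<Longrightarrow> F * F = F \<Longrightarrow> E j * F = F \<Longrightarrow> F = 0\<^sub>m n n \<or> F = E j"
  using E_primitive unfolding primitive_idempotent_def by blast

lemma E_inj: "i \<le> d \<Longrightarrow> j \<le> d \<Longrightarrow> E i = E j \<Longrightarrow> i = j"
  using idempotents unfolding prim_idempotents_def inj_on_def by auto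

lemma E0: "E 0 = (1 / of_nat n) \<cdot>\<^sub>m all_ones n"
  using idempotents unfolding prim_idempotents_def by blast

lemma E_complete: "primitive_idempotent n d R F \<Longrightarrow> \<exists>j\<le>d. F = E j"
  using idempotents unfolding prim_idempotents_def by blast

lemma E_orth:
  assumes i: "i \<le> d" and j: "j \<le> d" and "i \<noteq> j"
  shows "E i * E j = 0\<^sub>m n n"
proof (rule ccontr)
  let ?F = "E i * E j"
  assume nz: "?F \<noteq> 0\<^sub>m n n"
  have Ei: "E i \<in> carrier_mat n n" and Ej: "E j \<in> carrier_mat n n" using E_carrier i j by auto
  have comm: "E j * E i = E i * E j" using BM_mult_commute[OF E_BM[OF j] E_BM[OF i]] .
  have F: "?F \<in> BM" using BM_mult_closed[OF E_BM[OF i] E_BM[OF j]] .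
  have "?F * ?F = E i * (E j * E i) * E j" using Ei Ej by (simp add: assoc_mult_mat[of _ n n _ n _ n])
  also have "\<dots> = (E i * E i) * (E j * E j)"
    using Ei Ej comm by (simp add: assoc_mult_mat[of _ n n _ n _ n])
  finally have idem: "?F * ?F = ?F" using E_idem i j by simp
  have "E i * ?F = (E i * E i) * E j" using Ei Ej by (simp add: assoc_mult_mat[of _ n n _ n _ n])
  hence "?F = E i" using E_minimal[OF i F idem] nz E_idem[OF i] by auto
  moreover have "E j * ?F = (E j * E j) * E i"
    using Ei Ej comm by (simp add: assoc_mult_mat[of _ n n _ n _ n])
  hence "?F = E j" using E_minimal[OF j F idem] nz E_idem[OF j] comm by auto
  ultimately show False using E_inj[OF i j] \<open>i \<noteq> j\<close> by simp
qed

lemma mult_E_lincomb: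
  assumes X: "X \<in> carrier_mat n n"
    and a: "\<And>x y. x < n \<Longrightarrow> y < n \<Longrightarrow> X $$ (x, y) = (\<Sum>j\<le>d. a j * E j $$ (x, y))"
    and i: "i \<le> d"
  shows "X * E i = a i \<cdot>\<^sub>m E i"
proof (rule eq_square_matI)
  show "X * E i \<in> carrier_mat n n" "a i \<cdot>\<^sub>m E i \<in> carrier_mat n n" using X E_carrier[OF i] by auto
  fix x y assume xy: "x < n" "y < n"
  have EE: "(\<Sum>z<n. E j $$ (x, z) * E i $$ (z, y)) = (if j = i then E i $$ (x, y) else 0)"
    if j: "j \<le> d" for j
    using index_mult_mat_sum[OF E_carrier[OF j] E_carrier[OF i] xy] E_orth[OF j i] E_idem[OF i] xy
    by auto
  have "(X * E i) $$ (x, y) = (\<Sum>z<n. \<Sum>j\<le>d. a j * (E j $$ (x, z) * E i $$ (z, y)))"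
    unfolding index_mult_mat_sum[OF X E_carrier[OF i] xy]
    using a xy by (intro sum.cong refl) (simp add: sum_distrib_right mult.assoc)
  also have "\<dots> = (\<Sum>j\<le>d. a j * (\<Sum>z<n. E j $$ (x, z) * E i $$ (z, y)))"
    by (subst sum.swap) (simp add: sum_distrib_left)
  also have "\<dots> = a i * E i $$ (x, y)" using i by (simp add: EE if_distrib cong: if_cong)
  finally show "(X * E i) $$ (x, y) = (a i \<cdot>\<^sub>m E i) $$ (x, y)"
    using xy E_carrier[OF i] by simp
qed

lemma E_lincomb_zero:
  assumes "\<And>x y. x < n \<Longrightarrow> y < n \<Longrightarrow> (\<Sum>j\<le>d. w j * E j $$ (x, y)) = 0" and i: "i \<le> d"
  shows "w i = 0"
proof -
  have "0\<^sub>m n n * E i = w i \<cdot>\<^sub>m E i"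
    using assms by (intro mult_E_lincomb) auto
  moreover have "0 \<cdot>\<^sub>m E i = 0\<^sub>m n n" using E_carrier[OF i] by (intro eq_matI) auto
  ultimately have "w i \<cdot>\<^sub>m E i = 0 \<cdot>\<^sub>m E i" using E_carrier[OF i] by simp
  thus ?thesis using smult_mat_cancel[OF E_carrier[OF i] E_nonzero[OF i]] by blast
qed

text \<open>C expresses the idempotents in terms of the adjacency matrices; it is invertible because the
  d + 1 idempotents are linearly independent.\<close>

lemma E_coeff_mat_invertible:
  "\<exists>C D. C \<in> carrier_mat (Suc d) (Suc d) \<and> D \<in> carrier_mat (Suc d) (Suc d) \<and> D * C = 1\<^sub>m (Suc d) \<and>
    (\<forall>j\<le>d. \<forall>x<n. \<forall>y<n. E j $$ (x, y) = (\<Sum>k\<le>d. C $$ (j, k) * rel_ind k x y))"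
proof -
  have "\<exists>c. \<forall>x<n. \<forall>y<n. E j $$ (x, y) = (\<Sum>k\<le>d. c k * rel_ind k x y)" if "j \<le> d" for j
    by (rule BM_obtain_coeffs[OF E_BM[OF that]]) blast
  then obtain c where c: "\<And>j x y. j \<le> d \<Longrightarrow> x < n \<Longrightarrow> y < n \<Longrightarrow>
      E j $$ (x, y) = (\<Sum>k\<le>d. c j k * rel_ind k x y)"
    by metis
  define C where "C = mat (Suc d) (Suc d) (\<lambda>(j, k). c j k)"
  have C: "C \<in> carrier_mat (Suc d) (Suc d)" unfolding C_def by simp
  have "det (transpose_mat C) \<noteq> 0"
  proof
    assume "det (transpose_mat C) = 0"
    then obtain v where v: "v \<in> carrier_vec (Suc d)" "v \<noteq> 0\<^sub>v (Suc d)" "transpose_mat C *\<^sub>v v = 0\<^sub>v (Suc d)"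
      using det_0_iff_vec_prod_zero[of "transpose_mat C"] C by auto
    have col: "(\<Sum>j\<le>d. v $ j * c j k) = 0" if k: "k \<le> d" for k
    proof -
      have "(transpose_mat C *\<^sub>v v) $ k = (\<Sum>j<Suc d. c j k * v $ j)"
        using k v(1) C by (simp add: C_def scalar_prod_def lessThan_atLeast0)
      thus ?thesis using v(3) k by (simp add: lessThan_Suc_atMost mult.commute)
    qed
    have "(\<Sum>j\<le>d. v $ j * E j $$ (x, y)) = 0" if xy: "x < n" "y < n" for x y
    proof -
      have "(\<Sum>j\<le>d. v $ j * E j $$ (x, y)) = (\<Sum>j\<le>d. \<Sum>k\<le>d. v $ j * c j k * rel_ind k x y)"
        using c xy by (simp add: sum_distrib_left mult.assoc)
      also have "\<dots> = (\<Sum>k\<le>d. (\<Sum>j\<le>d. v $ j * c j k) * rel_ind k x y)"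
        by (subst sum.swap) (simp add: sum_distrib_right)
      finally show ?thesis using col by simp
    qed
    hence "v = 0\<^sub>v (Suc d)" using v(1) E_lincomb_zero by (intro eq_vecI) auto
    thus False using v(2) by simp
  qed
  hence "det C \<noteq> 0" using C by (simp add: det_transpose)
  from det_non_zero_imp_unit[OF C this, unfolded Units_def ring_mat_def, of "()"]
  obtain D where D: "D \<in> carrier_mat (Suc d) (Suc d)" "D * C = 1\<^sub>m (Suc d)" by auto
  have "\<forall>j\<le>d. \<forall>x<n. \<forall>y<n. E j $$ (x, y) = (\<Sum>k\<le>d. C $$ (j, k) * rel_ind k x y)"
    using c by (simp add: C_def)
  thus ?thesis using C D by blast
qed

lemma rel_ind_in_span_E:
  assumes k: "k \<le> d"
  obtains a where "\<And>x y. x < n \<Longrightarrow> y < n \<Longrightarrow> rel_ind k x y = (\<Sum>j\<le>d. a j * E j $$ (x, y))"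
proof -
  obtain C D where C: "C \<in> carrier_mat (Suc d) (Suc d)" and D: "D \<in> carrier_mat (Suc d) (Suc d)"
    and DC: "D * C = 1\<^sub>m (Suc d)"
    and c: "\<forall>j\<le>d. \<forall>x<n. \<forall>y<n. E j $$ (x, y) = (\<Sum>l\<le>d. C $$ (j, l) * rel_ind l x y)"
    using E_coeff_mat_invertible by blast
  have DC_entry: "(\<Sum>j\<le>d. D $$ (k, j) * C $$ (j, l)) = (if k = l then 1 else 0)" if l: "l \<le> d" for l
    using index_mult_mat_sum[OF D C, of k l] DC k l by (simp add: lessThan_Suc_atMost)
  have "rel_ind k x y = (\<Sum>j\<le>d. D $$ (k, j) * E j $$ (x, y))" if xy: "x < n" "y < n" for x y
  proof -
    have "(\<Sum>j\<le>d. D $$ (k, j) * E j $$ (x, y)) = (\<Sum>j\<le>d. \<Sum>l\<le>d. D $$ (k, j) * C $$ (j, l) * rel_ind l x y)"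
      using c xy by (simp add: sum_distrib_left mult.assoc)
    also have "\<dots> = (\<Sum>l\<le>d. (\<Sum>j\<le>d. D $$ (k, j) * C $$ (j, l)) * rel_ind l x y)"
      by (subst sum.swap) (simp add: sum_distrib_right)
    also have "\<dots> = (\<Sum>l\<le>d. if l = k then rel_ind k x y else 0)"
      using DC_entry by (intro sum.cong) auto
    finally show ?thesis using k by simp
  qed
  thus thesis by (rule that)
qed

lemma BM_in_span_E:
  assumes X: "X \<in> BM"
  obtains a where "\<And>x y. x < n \<Longrightarrow> y < n \<Longrightarrow> X $$ (x, y) = (\<Sum>j\<le>d. a j * E j $$ (x, y))"
proof -
  obtain c where c: "\<And>x y. x < n \<Longrightarrow> y < n \<Longrightarrow> X $$ (x, y) = (\<Sum>k\<le>d. c k * rel_ind k x y)"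
    using BM_obtain_coeffs[OF X] by blast
  have "\<exists>a. \<forall>x<n. \<forall>y<n. rel_ind k x y = (\<Sum>j\<le>d. a j * E j $$ (x, y))" if "k \<le> d" for k
    by (rule rel_ind_in_span_E[OF that]) blast
  then obtain a where a: "\<And>k x y. k \<le> d \<Longrightarrow> x < n \<Longrightarrow> y < n \<Longrightarrow>
      rel_ind k x y = (\<Sum>j\<le>d. a k j * E j $$ (x, y))"
    by metis
  have "X $$ (x, y) = (\<Sum>j\<le>d. (\<Sum>k\<le>d. c k * a k j) * E j $$ (x, y))" if xy: "x < n" "y < n" for x y
  proof -
    have "X $$ (x, y) = (\<Sum>k\<le>d. c k * (\<Sum>j\<le>d. a k j * E j $$ (x, y)))"
      using c a xy by simp
    also have "\<dots> = (\<Sum>j\<le>d. (\<Sum>k\<le>d. c k * a k j) * E j $$ (x, y))"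
      by (simp add: sum_distrib_left sum_distrib_right mult.assoc) (rule sum.swap)
    finally show ?thesis .
  qed
  thus thesis by (rule that)
qed

definition eigval :: "complex mat \<Rightarrow> nat \<Rightarrow> complex" where
  "eigval X j = (SOME c. X * E j = c \<cdot>\<^sub>m E j)"

lemma mult_E_eigval:
  assumes "X \<in> BM" "j \<le> d"
  shows "X * E j = eigval X j \<cdot>\<^sub>m E j"
proof -
  obtain a where "\<And>x y. x < n \<Longrightarrow> y < n \<Longrightarrow> X $$ (x, y) = (\<Sum>j\<le>d. a j * E j $$ (x, y))"
    using BM_in_span_E[OF assms(1)] by blast
  hence "X * E j = a j \<cdot>\<^sub>m E j" by (rule mult_E_lincomb[OF BM_carrier[OF assms(1)] _ assms(2)])
  hence "\<exists>c. X * E j = c \<cdot>\<^sub>m E j" by blast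
  thus ?thesis unfolding eigval_def by (rule someI_ex)
qed

lemma eigval_eqI:
  assumes "X \<in> BM" "j \<le> d" "X * E j = c \<cdot>\<^sub>m E j"
  shows "eigval X j = c"
  using smult_mat_cancel[OF E_carrier[OF assms(2)] E_nonzero[OF assms(2)]]
    mult_E_eigval[OF assms(1,2)] assms(3) by simp

lemma sum_E_entry:
  assumes "x < n" "y < n"
  shows "(\<Sum>j\<le>d. E j $$ (x, y)) = (if x = y then 1 else 0)"
proof -
  obtain a where a: "\<And>x y. x < n \<Longrightarrow> y < n \<Longrightarrow> 1\<^sub>m n $$ (x, y) = (\<Sum>j\<le>d. a j * E j $$ (x, y))"
    using BM_in_span_E[OF one_mat_BM] by blast
  have "a j = 1" if j: "j \<le> d" for j
  proof -
    have "1\<^sub>m n * E j = a j \<cdot>\<^sub>m E j" by (rule mult_E_lincomb[OF _ a j]) simp_all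
    hence "a j \<cdot>\<^sub>m E j = 1 \<cdot>\<^sub>m E j" using E_carrier[OF j] by (simp add: one_smult_mat)
    thus ?thesis using smult_mat_cancel[OF E_carrier[OF j] E_nonzero[OF j]] by blast
  qed
  thus ?thesis using a assms by simp
qed

lemma entry_sum_mult_E:
  assumes X: "X \<in> carrier_mat n n" and xy: "x < n" "y < n"
  shows "X $$ (x, y) = (\<Sum>j\<le>d. (X * E j) $$ (x, y))"
proof -
  have "(\<Sum>j\<le>d. (X * E j) $$ (x, y)) = (\<Sum>j\<le>d. \<Sum>z<n. X $$ (x, z) * E j $$ (z, y))"
    using xy X E_carrier by (intro sum.cong refl) (simp add: index_mult_mat_sum del: index_mult_mat)
  also have "\<dots> = (\<Sum>z<n. X $$ (x, z) * (\<Sum>j\<le>d. E j $$ (z, y)))"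
    by (subst sum.swap) (simp add: sum_distrib_left)
  also have "\<dots> = (\<Sum>z<n. if z = y then X $$ (x, y) else 0)"
    using sum_E_entry xy by (intro sum.cong refl) auto
  finally show ?thesis using xy by simp
qed

lemma entry_sum_E_mult:
  assumes X: "X \<in> carrier_mat n n" and xy: "x < n" "y < n"
  shows "X $$ (x, y) = (\<Sum>j\<le>d. (E j * X) $$ (x, y))"
proof -
  have "(\<Sum>j\<le>d. (E j * X) $$ (x, y)) = (\<Sum>j\<le>d. \<Sum>z<n. E j $$ (x, z) * X $$ (z, y))"
    using xy X E_carrier by (intro sum.cong refl) (simp add: index_mult_mat_sum del: index_mult_mat)
  also have "\<dots> = (\<Sum>z<n. (\<Sum>j\<le>d. E j $$ (x, z)) * X $$ (z, y))"
    by (subst sum.swap) (simp add: sum_distrib_right)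
  also have "\<dots> = (\<Sum>z<n. if z = x then X $$ (x, y) else 0)"
    using sum_E_entry xy by (intro sum.cong refl) auto
  finally show ?thesis using xy by simp
qed

lemma eq_if_mult_E_eq:
  assumes "X \<in> carrier_mat n n" "Y \<in> carrier_mat n n" "\<And>j. j \<le> d \<Longrightarrow> X * E j = Y * E j"
  shows "X = Y"
  using assms by (intro eq_square_matI) (auto simp: entry_sum_mult_E[OF assms(1)] entry_sum_mult_E[OF assms(2)])

lemma eigval_add:
  assumes "X \<in> BM" "Y \<in> BM" "j \<le> d"
  shows "eigval (X + Y) j = eigval X j + eigval Y j"
proof (rule eigval_eqI[OF BM_add_closed[OF assms(1,2)] assms(3)])
  have "(X + Y) * E j = X * E j + Y * E j"
    using add_mult_distrib_mat[OF BM_carrier[OF assms(1)] BM_carrier[OF assms(2)] E_carrier[OF assms(3)]] .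
  thus "(X + Y) * E j = (eigval X j + eigval Y j) \<cdot>\<^sub>m E j"
    using assms E_carrier[OF assms(3)] by (simp add: mult_E_eigval add_smult_distrib_right_mat)
qed

lemma eigval_adj_Un:
  assumes "a \<le> d" "b \<le> d" "a \<noteq> b" "j \<le> d"
  shows "eigval (adj_mat n (R a \<union> R b)) j = eigval (adj_mat n (R a)) j + eigval (adj_mat n (R b)) j"
  using adj_mat_Un[OF rel_disjoint[OF assms(1-3)]] eigval_add[OF adj_mat_BM adj_mat_BM assms(4)] assms(1,2)
  by simp

lemma eigenvalues_BM:
  assumes X: "X \<in> BM"
  shows "Collect (eigenvalue X) = eigval X ` {..d}"
proof
  show "eigval X ` {..d} \<subseteq> Collect (eigenvalue X)"
    using eigenvalueI_mult_smult[OF BM_carrier[OF X] E_carrier E_nonzero mult_E_eigval[OF X]] by auto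
  show "Collect (eigenvalue X) \<subseteq> eigval X ` {..d}"
  proof
    fix \<mu> assume "\<mu> \<in> Collect (eigenvalue X)"
    from eigenvalue_in_resolution[OF BM_carrier[OF X] this[simplified], of d E "eigval X"]
    show "\<mu> \<in> eigval X ` {..d}"
      using E_carrier sum_E_entry mult_E_eigval[OF X] BM_mult_commute[OF E_BM X] by auto
  qed
qed

lemma all_ones_mult_E:
  assumes j: "j \<le> d"
  shows "all_ones n * E j = (if j = 0 then of_nat n \<cdot>\<^sub>m E 0 else 0\<^sub>m n n)"
proof -
  have J: "all_ones n = of_nat n \<cdot>\<^sub>m E 0"
    using E0 n_pos by (intro eq_matI) (auto simp: all_ones_def)
  have "all_ones n * E j = of_nat n \<cdot>\<^sub>m (E 0 * E j)"
    unfolding J using mult_smult_assoc_mat[OF E_carrier[of 0] E_carrier[OF j]] by simp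
  thus ?thesis using E_orth[of 0 j] E_idem[of 0] j by auto
qed

lemma eigval_adj_E0_row_card:
  assumes i: "i \<le> d" and x: "x < n"
  shows "eigval (adj_mat n (R i)) 0 = of_nat (card {z. z < n \<and> (x, z) \<in> R i})"
proof -
  have E0_entry: "E 0 $$ (z, 0) = 1 / of_nat n" if "z < n" for z
    using E0 n_pos that by (simp add: all_ones_def)
  have "(\<Sum>z<n. (if (x, z) \<in> R i then 1 else 0) * E 0 $$ (z, 0)) = eigval (adj_mat n (R i)) 0 * E 0 $$ (x, 0)"
    by (rule adj_mat_mult_col[OF E_carrier mult_E_eigval[OF adj_mat_BM[OF i]] x n_pos]) simp_all
  hence "(\<Sum>z<n. (if (x, z) \<in> R i then 1 else 0)) / of_nat n = eigval (adj_mat n (R i)) 0 / of_nat n"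
    using E0_entry x by (simp add: sum_divide_distrib)
  hence "(\<Sum>z<n. (if (x, z) \<in> R i then 1 else 0)) = eigval (adj_mat n (R i)) 0"
    using n_pos by simp
  thus ?thesis by (simp add: sum_indicator_card)
qed

lemma eigval_adj_E0:
  "i \<le> d \<Longrightarrow> eigval (adj_mat n (R i)) 0 = of_nat (valency n (R i))"
  using eigval_adj_E0_row_card[OF _ n_pos] by (simp add: valency_def)

lemma row_card_eq_valency:
  "i \<le> d \<Longrightarrow> x < n \<Longrightarrow> card {z. z < n \<and> (x, z) \<in> R i} = valency n (R i)"
  using eigval_adj_E0_row_card eigval_adj_E0 by (metis of_nat_eq_iff)

lemma norm_eigval_adj_le_valency:
  assumes i: "i \<le> d" and j: "j \<le> d"
  shows "cmod (eigval (adj_mat n (R i)) j) \<le> valency n (R i)"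
proof -
  obtain x0 c where xc: "x0 < n" "c < n" "E j $$ (x0, c) \<noteq> 0"
    using nonzero_mat_obtain_entry[OF E_carrier[OF j] E_nonzero[OF j]] by blast
  show ?thesis
  proof (rule eigenvalue_norm_le_row_sum[where A = "\<lambda>x z. if (x, z) \<in> R i then 1 else 0"
        and v = "\<lambda>z. E j $$ (z, c)" and n = n])
    show "(\<Sum>z<n. if (x, z) \<in> R i then 1 else 0) = (of_real (valency n (R i)) :: complex)"
      if "x < n" for x
      using sum_indicator_card[of "\<lambda>z. (x, z) \<in> R i" n] row_card_eq_valency[OF i that]
      by (simp add: of_real_of_nat_eq)
    show "(\<Sum>z<n. (if (x, z) \<in> R i then 1 else 0) * E j $$ (z, c)) = eigval (adj_mat n (R i)) j * E j $$ (x, c)"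
      if "x < n" for x
      by (rule adj_mat_mult_col[OF E_carrier[OF j] mult_E_eigval[OF adj_mat_BM[OF i] j] that xc(2)])
  qed (use xc in auto)
qed

lemma transpose_E_primitive:
  assumes j: "j \<le> d"
  shows "primitive_idempotent n d R (transpose_mat (E j))"
proof -
  let ?T = "transpose_mat (E j)"
  have Ej: "E j \<in> carrier_mat n n" using E_carrier[OF j] .
  have "?T * ?T = ?T" using transpose_mult[OF Ej Ej] E_idem[OF j] by simp
  moreover have "?T \<noteq> 0\<^sub>m n n" using E_nonzero[OF j] by (metis transpose_transpose zero_transpose_mat)
  moreover have "F = 0\<^sub>m n n \<or> F = ?T" if F: "F \<in> BM" "F * F = F" "?T * F = F" for F
  proof -
    have Fc: "F \<in> carrier_mat n n" using BM_carrier[OF F(1)] .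
    let ?G = "transpose_mat F"
    have G: "?G \<in> BM" using BM_transpose_closed[OF F(1)] .
    have "?G * ?G = ?G" using transpose_mult[OF Fc Fc] F(2) by simp
    moreover have "?G * E j = ?G" using transpose_mult[of ?T n n F n] Fc Ej F(3) by simp
    hence "E j * ?G = ?G" using BM_mult_commute[OF G E_BM[OF j]] by simp
    ultimately have "?G = 0\<^sub>m n n \<or> ?G = E j" using E_minimal[OF j G] by blast
    thus ?thesis by (metis transpose_transpose zero_transpose_mat)
  qed
  ultimately show ?thesis
    unfolding primitive_idempotent_def using BM_transpose_closed[OF E_BM[OF j]] by blast
qed

definition E_dual :: "nat \<Rightarrow> nat" where
  "E_dual j = (SOME j'. j' \<le> d \<and> transpose_mat (E j) = E j')"

lemma E_dual: "j \<le> d \<Longrightarrow> E_dual j \<le> d \<and> transpose_mat (E j) = E (E_dual j)"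
  unfolding E_dual_def by (rule someI_ex) (use E_complete[OF transpose_E_primitive] in metis)

lemma eigval_transpose_E_dual:
  assumes X: "X \<in> BM" and j: "j \<le> d"
  shows "eigval (transpose_mat X) (E_dual j) = eigval X j"
proof (rule eigval_eqI)
  show XT: "transpose_mat X \<in> BM" using BM_transpose_closed[OF X] .
  show j': "E_dual j \<le> d" using E_dual[OF j] by blast
  have "E (E_dual j) * transpose_mat X = transpose_mat (X * E j)"
    using E_dual[OF j] transpose_mult[OF BM_carrier[OF X] E_carrier[OF j]] by simp
  also have "\<dots> = eigval X j \<cdot>\<^sub>m E (E_dual j)"
    using mult_E_eigval[OF X j] E_dual[OF j] by (simp add: transpose_smult_mat)
  finally show "transpose_mat X * E (E_dual j) = eigval X j \<cdot>\<^sub>m E (E_dual j)"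
    using BM_mult_commute[OF E_BM[OF j'] XT] by simp
qed

lemma eigval_transpose_adj:
  assumes i: "i \<le> d" and j: "j \<le> d"
  shows "eigval (transpose_mat (adj_mat n (R i))) j = cnj (eigval (adj_mat n (R i)) j)"
proof -
  have AT: "transpose_mat (adj_mat n (R i)) \<in> BM" using BM_transpose_closed[OF adj_mat_BM[OF i]] .
  obtain x0 c where xc: "x0 < n" "c < n" "E j $$ (x0, c) \<noteq> 0"
    using nonzero_mat_obtain_entry[OF E_carrier[OF j] E_nonzero[OF j]] by blast
  have "eigval (adj_mat n (R i)) j = cnj (eigval (transpose_mat (adj_mat n (R i))) j)"
  proof (rule real_mat_eigenvalues_transpose_cnj[where A = "\<lambda>x z. if (x, z) \<in> R i then 1 else 0"
        and v = "\<lambda>z. E j $$ (z, c)" and n = n])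
    show "(\<Sum>z<n. (if (x, z) \<in> R i then 1 else 0) * E j $$ (z, c)) = eigval (adj_mat n (R i)) j * E j $$ (x, c)"
      if "x < n" for x
      by (rule adj_mat_mult_col[OF E_carrier[OF j] mult_E_eigval[OF adj_mat_BM[OF i] j] that xc(2)])
    show "(\<Sum>z<n. (if (z, x) \<in> R i then 1 else 0) * E j $$ (z, c))
        = eigval (transpose_mat (adj_mat n (R i))) j * E j $$ (x, c)" if "x < n" for x
    proof -
      have "adj_mat n ((R i)\<inverse>) * E j = eigval (transpose_mat (adj_mat n (R i))) j \<cdot>\<^sub>m E j"
        using mult_E_eigval[OF AT j] by (simp add: adj_mat_converse)
      from adj_mat_mult_col[OF E_carrier[OF j] this that xc(2)] show ?thesis by simp
    qed
  qed (use xc in auto)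
  thus ?thesis by simp
qed

end

section \<open>Two-class and amorphic schemes\<close>

lemma two_class_adj_sq:
  fixes Q :: "nat \<Rightarrow> (nat \<times> nat) set"
  assumes Q: "assoc_scheme n 2 Q"
    and p: "\<And>k u v. k \<le> 2 \<Longrightarrow> (u, v) \<in> Q k \<Longrightarrow> card {z. z < n \<and> (u, z) \<in> Q 1 \<and> (z, v) \<in> Q 1} = p k"
  shows "adj_mat n (Q 1) * adj_mat n (Q 1) = of_nat (p 0) \<cdot>\<^sub>m 1\<^sub>m n + of_nat (p 1) \<cdot>\<^sub>m adj_mat n (Q 1)
    + of_nat (p 2) \<cdot>\<^sub>m (all_ones n - 1\<^sub>m n - adj_mat n (Q 1))"
proof -
  interpret Q: association_scheme n 2 Q by (rule association_scheme.intro[OF Q])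
  let ?rhs = "of_nat (p 0) \<cdot>\<^sub>m 1\<^sub>m n + of_nat (p 1) \<cdot>\<^sub>m adj_mat n (Q 1)
    + of_nat (p 2) \<cdot>\<^sub>m (all_ones n - 1\<^sub>m n - adj_mat n (Q 1))"
  show ?thesis
  proof (rule eq_square_matI[where n = n])
    show "adj_mat n (Q 1) * adj_mat n (Q 1) \<in> carrier_mat n n"
      by (rule mult_carrier_mat[OF adj_mat_carrier adj_mat_carrier])
    show "?rhs \<in> carrier_mat n n"
      by (intro add_carrier_mat smult_carrier_mat minus_carrier_mat adj_mat_carrier)
  next
    fix u v assume uv: "u < n" "v < n"
    then obtain k where k: "k \<le> 2" "(u, v) \<in> Q k" using Q.ex1_rel by blast
    have lhs: "(adj_mat n (Q 1) * adj_mat n (Q 1)) $$ (u, v) = of_nat (p k)"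
      using index_adj_mat_mult_adj_mat[OF uv] p[OF k] by simp
    have rhs: "?rhs $$ (u, v) = of_nat (p 0) * (if u = v then 1 else 0)
        + of_nat (p 1) * (if (u, v) \<in> Q 1 then 1 else 0)
        + of_nat (p 2) * (1 - (if u = v then 1 else 0) - (if (u, v) \<in> Q 1 then 1 else 0))"
      using uv by (simp add: all_ones_def)
    have "k = 0 \<or> k = 1 \<or> k = 2" using k(1) by auto
    then consider "k = 0" | "k = 1" | "k = 2" by blast
    thus "(adj_mat n (Q 1) * adj_mat n (Q 1)) $$ (u, v) = ?rhs $$ (u, v)"
    proof cases
      case 1
      hence "u = v" using k(2) Q.R0 by auto
      thus ?thesis using lhs rhs Q.irrefl_rel[of 1 u] \<open>k = 0\<close> by simp
    next
      case 2
      hence "u \<noteq> v" using k(2) Q.irrefl_rel[of 1 u] by auto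
      thus ?thesis using lhs rhs k(2) \<open>k = 1\<close> by simp
    next
      case 3
      hence "u \<noteq> v" "(u, v) \<notin> Q 1" using k(2) Q.irrefl_rel[of 2 u] Q.rel_unique[of 1 2 u v] by auto
      thus ?thesis using lhs rhs \<open>k = 2\<close> by simp
    qed
  qed
qed

lemma two_class_eigenvalue_equation:
  fixes Q :: "nat \<Rightarrow> (nat \<times> nat) set"
  assumes Q: "assoc_scheme n 2 Q"
    and p: "\<And>k u v. k \<le> 2 \<Longrightarrow> (u, v) \<in> Q k \<Longrightarrow> card {z. z < n \<and> (u, z) \<in> Q 1 \<and> (z, v) \<in> Q 1} = p k"
    and F: "F \<in> carrier_mat n n" "F \<noteq> 0\<^sub>m n n"
    and AF: "adj_mat n (Q 1) * F = \<kappa> \<cdot>\<^sub>m F" and JF: "all_ones n * F = s \<cdot>\<^sub>m F"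
  shows "\<kappa>\<^sup>2 = of_nat (p 0) + of_nat (p 1) * \<kappa> + of_nat (p 2) * (s - 1 - \<kappa>)"
proof -
  let ?A = "adj_mat n (Q 1)"
  have A: "?A \<in> carrier_mat n n" by simp
  have "(?A * ?A) * F = ?A * (\<kappa> \<cdot>\<^sub>m F)" using assoc_mult_mat[OF A A F(1)] AF by simp
  also have "\<dots> = \<kappa> \<cdot>\<^sub>m (?A * F)" by (rule mult_smult_distrib[OF A F(1)])
  also have "\<dots> = \<kappa>\<^sup>2 \<cdot>\<^sub>m F" unfolding AF by (simp add: smult_smult_mat power2_eq_square)
  finally have lhs: "(?A * ?A) * F = \<kappa>\<^sup>2 \<cdot>\<^sub>m F" .
  let ?M0 = "of_nat (p 0) \<cdot>\<^sub>m 1\<^sub>m n" and ?M1 = "of_nat (p 1) \<cdot>\<^sub>m ?A"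
    and ?M2 = "of_nat (p 2) \<cdot>\<^sub>m (all_ones n - 1\<^sub>m n - ?A)"
  have M: "?M0 \<in> carrier_mat n n" "?M1 \<in> carrier_mat n n" "?M2 \<in> carrier_mat n n"
    by (simp_all add: minus_carrier_mat)
  have "(?A * ?A) * F = (?M0 + ?M1 + ?M2) * F" by (simp only: two_class_adj_sq[OF Q p])
  also have "\<dots> = ?M0 * F + ?M1 * F + ?M2 * F"
    using add_mult_distrib_mat[OF add_carrier_mat[OF M(2)] M(3) F(1)] add_mult_distrib_mat[OF M(1,2) F(1)]
    by simp
  also have "\<dots> = of_nat (p 0) \<cdot>\<^sub>m F + (of_nat (p 1) * \<kappa>) \<cdot>\<^sub>m F
      + of_nat (p 2) \<cdot>\<^sub>m (s \<cdot>\<^sub>m F - F - \<kappa> \<cdot>\<^sub>m F)"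
  proof -
    have "?M0 * F = of_nat (p 0) \<cdot>\<^sub>m F" using mult_smult_assoc_mat[OF one_carrier_mat F(1)] F(1) by simp
    moreover have "?M1 * F = (of_nat (p 1) * \<kappa>) \<cdot>\<^sub>m F"
      using mult_smult_assoc_mat[OF A F(1)] AF by (simp add: smult_smult_mat)
    moreover have "(all_ones n - 1\<^sub>m n - ?A) * F = s \<cdot>\<^sub>m F - F - \<kappa> \<cdot>\<^sub>m F"
      using minus_mult_distrib_mat[OF minus_carrier_mat[OF one_carrier_mat] A F(1)]
        minus_mult_distrib_mat[OF all_ones_carrier one_carrier_mat F(1)] AF JF F(1) by simp
    hence "?M2 * F = of_nat (p 2) \<cdot>\<^sub>m (s \<cdot>\<^sub>m F - F - \<kappa> \<cdot>\<^sub>m F)"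
      using mult_smult_assoc_mat[OF minus_carrier_mat[OF A] F(1)] by simp
    ultimately show ?thesis by simp
  qed
  also have "\<dots> = (of_nat (p 0) + of_nat (p 1) * \<kappa> + of_nat (p 2) * (s - 1 - \<kappa>)) \<cdot>\<^sub>m F"
    using F(1) by (intro eq_matI) (auto simp: algebra_simps)
  finally have "(of_nat (p 0) + of_nat (p 1) * \<kappa> + of_nat (p 2) * (s - 1 - \<kappa>)) \<cdot>\<^sub>m F = \<kappa>\<^sup>2 \<cdot>\<^sub>m F"
    unfolding lhs by (rule sym)
  from smult_mat_cancel[OF F this] show ?thesis by (rule sym)
qed

text \<open>Applying the identity of two_class_adj_sq to F0 and to F shows that the intersection number
  p 1 1 2 vanishes, so no pair in Q 2 has a common Q 1 neighbour.\<close>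

lemma two_class_scheme_trans:
  fixes Q :: "nat \<Rightarrow> (nat \<times> nat) set"
  assumes Q: "assoc_scheme n 2 Q"
    and F0: "F0 \<in> carrier_mat n n" "F0 \<noteq> 0\<^sub>m n n" "adj_mat n (Q 1) * F0 = \<kappa> \<cdot>\<^sub>m F0"
      "all_ones n * F0 = of_nat n \<cdot>\<^sub>m F0"
    and F: "F \<in> carrier_mat n n" "F \<noteq> 0\<^sub>m n n" "adj_mat n (Q 1) * F = \<kappa> \<cdot>\<^sub>m F"
      "all_ones n * F = 0\<^sub>m n n"
    and xy: "(x, y) \<in> Q 1" and yz: "(y, z) \<in> Q 1" and xz: "x \<noteq> z"
  shows "(x, z) \<in> Q 1"
proof (rule ccontr)
  assume nxz: "(x, z) \<notin> Q 1"
  interpret Q: association_scheme n 2 Q by (rule association_scheme.intro[OF Q])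
  obtain p where "\<forall>i\<le>2. \<forall>j\<le>2. \<forall>k\<le>2. \<forall>u v. (u, v) \<in> Q k \<longrightarrow>
      card {w. w < n \<and> (u, w) \<in> Q i \<and> (w, v) \<in> Q j} = p i j k"
    using Q.intersection_numbers by blast
  hence p: "card {w. w < n \<and> (u, w) \<in> Q 1 \<and> (w, v) \<in> Q 1} = p 1 1 k"
    if "k \<le> 2" "(u, v) \<in> Q k" for k u v
    using that by simp
  have "0 \<cdot>\<^sub>m F = 0\<^sub>m n n" using F(1) by (intro eq_matI) auto
  hence "all_ones n * F = 0 \<cdot>\<^sub>m F" using F(4) by simp
  from two_class_eigenvalue_equation[where p = "p 1 1", OF Q p F(1-3) this]
    two_class_eigenvalue_equation[where p = "p 1 1", OF Q p F0]
  have "of_nat (p 1 1 2) * (of_nat n - 1 - \<kappa>) = of_nat (p 1 1 2) * (0 - 1 - \<kappa>)" by simp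
  hence "of_nat (p 1 1 2) * (of_nat n :: complex) = 0" by (simp add: algebra_simps)
  hence p2: "p 1 1 2 = 0" using Q.n_pos by simp
  have xzn: "x < n" "z < n" using Q.rel_in_range[of 1 x y] Q.rel_in_range[of 1 y z] xy yz by simp_all
  obtain k where k: "k \<le> 2" "(x, z) \<in> Q k" using Q.ex1_rel[OF xzn] by blast
  have "k \<noteq> 0"
  proof
    assume "k = 0"
    thus False using k(2) xz Q.R0 by auto
  qed
  moreover have "k \<noteq> 1" using k nxz by auto
  ultimately have "k = 2" using k(1) by linarith
  hence "(x, z) \<in> Q 2" using k(2) by simp
  hence "card {w. w < n \<and> (x, w) \<in> Q 1 \<and> (w, z) \<in> Q 1} = 0" using p[of 2] p2 by simp
  moreover have "y \<in> {w. w < n \<and> (x, w) \<in> Q 1 \<and> (w, z) \<in> Q 1}"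
    using Q.rel_in_range[of 1 x y] xy yz by simp
  moreover have "finite {w. w < n \<and> (x, w) \<in> Q 1 \<and> (w, z) \<in> Q 1}" by simp
  ultimately show False using card_0_eq by blast
qed

lemma merge_rel_indicator:
  fixes P :: "nat set"
  assumes P: "P \<subseteq> {1..d}" "P \<noteq> {}" "\<not> {1..d} \<subseteq> P"
  shows "(\<lambda>l. if l \<in> P then 1 else 2) ` {1..d} = {1..2::nat}"
    and "merge_rel R d (\<lambda>l. if l \<in> P then 1 else 2) 1 = (\<Union>l\<in>P. R l)"
proof -
  obtain a where a: "a \<in> P" using P(2) by blast
  obtain b where b: "b \<in> {1..d}" "b \<notin> P" using P(3) by blast
  let ?f = "\<lambda>l. if l \<in> P then 1 else 2::nat"
  have one: "1 \<in> ?f ` {1..d}" using a P(1) by (intro image_eqI[of _ _ a]) auto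
  have two: "2 \<in> ?f ` {1..d}" using b by (intro image_eqI[of _ _ b]) auto
  show "?f ` {1..d} = {1..2}"
  proof
    show "?f ` {1..d} \<subseteq> {1..2}" by auto
    show "{1..2} \<subseteq> ?f ` {1..d}"
    proof
      fix c :: nat assume "c \<in> {1..2}"
      hence "c = 1 \<or> c = 2" by (simp, arith)
      thus "c \<in> ?f ` {1..d}" using one two by blast
    qed
  qed
  have "{R i | i. 1 \<le> i \<and> i \<le> d \<and> ?f i = 1} = R ` P"
  proof
    show "R ` P \<subseteq> {R i | i. 1 \<le> i \<and> i \<le> d \<and> ?f i = 1}" using P(1) by force
  qed auto
  thus "merge_rel R d ?f 1 = (\<Union>l\<in>P. R l)" by (simp add: merge_rel_def)
qed

context comm_scheme_idempotents
begin

lemma amorphic_merge_trans: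
  assumes amor: "amorphic n d R" and P: "P \<subseteq> {1..d}" "P \<noteq> {}" "\<not> {1..d} \<subseteq> P"
    and m: "0 < m" "m \<le> d"
    and A0: "adj_mat n (\<Union>l\<in>P. R l) * E 0 = \<kappa> \<cdot>\<^sub>m E 0"
    and Am: "adj_mat n (\<Union>l\<in>P. R l) * E m = \<kappa> \<cdot>\<^sub>m E m"
    and xy: "(x, y) \<in> (\<Union>l\<in>P. R l)" and yz: "(y, z) \<in> (\<Union>l\<in>P. R l)" and xz: "x \<noteq> z"
  shows "(x, z) \<in> (\<Union>l\<in>P. R l)"
proof -
  let ?f = "\<lambda>l. if l \<in> P then 1 else 2 :: nat"
  have Q: "assoc_scheme n 2 (merge_rel R d ?f)"
    using amor merge_rel_indicator(1)[OF P] unfolding amorphic_def by blast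
  have J0: "all_ones n * E 0 = of_nat n \<cdot>\<^sub>m E 0" using all_ones_mult_E[of 0] by simp
  have Jm: "all_ones n * E m = 0\<^sub>m n n" using all_ones_mult_E[OF m(2)] m(1) by simp
  note merge = merge_rel_indicator(2)[OF P, of R]
  have "(x, z) \<in> merge_rel R d ?f 1"
    by (rule two_class_scheme_trans[OF Q E_carrier[of 0] E_nonzero[of 0] A0[folded merge] J0
          E_carrier[OF m(2)] E_nonzero[OF m(2)] Am[folded merge] Jm xy[folded merge] yz[folded merge] xz])
      simp_all
  thus ?thesis unfolding merge .
qed

lemma rel_successor_exists:
  assumes i: "i \<le> d" and x: "x < n"
  obtains z where "(x, z) \<in> R i"
proof -
  obtain a b where ab: "(a, b) \<in> R i" using rel_nonempty[OF i] by auto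
  hence "b \<in> {z. z < n \<and> (a, z) \<in> R i}" using rel_in_range[OF i] by simp
  hence "card {z. z < n \<and> (a, z) \<in> R i} \<noteq> 0" by (metis card_0_eq empty_iff finite_Collect_conjI finite_Collect_less_nat)
  hence "card {z. z < n \<and> (x, z) \<in> R i} \<noteq> 0"
    using row_card_eq_valency[OF i x] row_card_eq_valency[OF i] rel_in_range[OF i ab] by simp
  thus thesis using that by (metis (no_types, lifting) card.empty empty_Collect_eq)
qed

text \<open>Merging shows that R i, R i' and R i \<union> R i' would all be unions of cliques off the
  diagonal, which is impossible for two disjoint nonempty classes.\<close>

lemma amorphic_eigval_valency_unique:
  assumes amor: "amorphic n d R" and d: "3 \<le> d"
    and i: "0 < i" "i \<le> d" and i': "0 < i'" "i' \<le> d" "i \<noteq> i'" and m: "0 < m" "m \<le> d"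
    and ev: "eigval (adj_mat n (R i)) m = of_nat (valency n (R i))"
    and ev': "eigval (adj_mat n (R i')) m = of_nat (valency n (R i'))"
  shows False
proof -
  have sym: "(y, x) \<in> R l" if "l \<le> d" "(x, y) \<in> R l" for l x y
    using amor that unfolding amorphic_def symmetric_scheme_def by blast
  have big: "\<not> {1..d} \<subseteq> {i, i'}"
  proof
    assume "{1..d} \<subseteq> {i, i'}"
    hence "card {1..d} \<le> card {i, i'}" by (intro card_mono) auto
    thus False using d i'(3) by simp
  qed
  have val: "eigval (adj_mat n (R l)) j = of_nat (valency n (R l))" if "l \<in> {i, i'}" "j \<in> {0, m}" for l j
    using that eigval_adj_E0[of l] ev ev' i i' by auto
  have trans1: "(x, z) \<in> R l" if l: "l \<in> {i, i'}" and "(x, y) \<in> R l" "(y, z) \<in> R l" "x \<noteq> z" for l x y z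
  proof -
    have P: "{l} \<subseteq> {1..d}" "\<not> {1..d} \<subseteq> {l}" and ld: "l \<le> d" using l i i' big by auto
    have "adj_mat n (R l) * E j = of_nat (valency n (R l)) \<cdot>\<^sub>m E j" if "j \<in> {0, m}" for j
      using mult_E_eigval[OF adj_mat_BM[OF ld], of j] val[OF l that] that m by auto
    thus ?thesis using amorphic_merge_trans[OF amor P(1) _ P(2) m, of "of_nat (valency n (R l))" x y z] that
      by simp
  qed
  have trans2: "(x, z) \<in> R i \<union> R i'" if "(x, y) \<in> R i \<union> R i'" "(y, z) \<in> R i \<union> R i'" "x \<noteq> z" for x y z
    using amorphic_merge_trans[OF amor _ _ big m, of "of_nat (valency n (R i)) + of_nat (valency n (R i'))" x y z]
      mult_E_eigval[OF adj_mat_Un_BM[OF i(2) i'(2,3)]] eigval_adj_Un[OF i(2) i'(2,3)] val i i' m that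
    by simp
  obtain x y where xy: "(x, y) \<in> R i" using rel_nonempty[OF i(2)] by auto
  obtain z where yz: "(y, z) \<in> R i'" using rel_successor_exists[OF i'(2)] rel_in_range[OF i(2) xy] by blast
  have disj: "R i \<inter> R i' = {}" by (rule rel_disjoint[OF i(2) i'(2,3)])
  have "x \<noteq> z" using xy yz disj sym[OF i(2)] by blast
  moreover have "y \<noteq> z" "x \<noteq> y" using irrefl_rel i i' xy yz by blast+
  ultimately show False
    using trans2[of x y z] trans1[of i y x z] trans1[of i' x z y] xy yz sym[OF i(2) xy] sym[OF i'(2) yz] disj
    by blast
qed

end

section \<open>A skew scheme with amorphic symmetrization\<close>

locale amorphic_symmetrization =
  fixes n :: nat and R :: "nat \<Rightarrow> (nat \<times> nat) set" and E Et :: "nat \<Rightarrow> complex mat"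
  assumes commutative: "commutative_scheme n 4 R"
    and converse_R3: "(R 3)\<inverse> = R 4"
    and idempotents: "prim_idempotents n 4 R E"
    and amorphic: "amorphic n 3 (symmetrization R)"
    and idempotents_sym: "prim_idempotents n 3 (symmetrization R) Et"
    and numbering: "\<And>i. i \<in> {1, 2, 3} \<Longrightarrow> \<exists>a b. a \<noteq> b \<and>
      adj_mat n (symmetrization R i) * Et i = b \<cdot>\<^sub>m Et i \<and>
      (\<forall>j\<in>{1, 2, 3}. j \<noteq> i \<longrightarrow> adj_mat n (symmetrization R i) * Et j = a \<cdot>\<^sub>m Et j)"
    and Et3_not_E: "Et 3 \<notin> {E 1, E 2, E 3, E 4}"
begin

abbreviation Rt where "Rt \<equiv> symmetrization R"
abbreviation A where "A k \<equiv> adj_mat n (R k)"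
abbreviation At where "At l \<equiv> adj_mat n (Rt l)"

lemma symmetric: "symmetric_scheme n 3 Rt"
  using amorphic unfolding amorphic_def by blast

sublocale X: comm_scheme_idempotents n 4 R E
  by unfold_locales (rule commutative, rule idempotents)

sublocale Xt: comm_scheme_idempotents n 3 Rt Et
  by unfold_locales (rule symmetric_scheme_commutative[OF symmetric], rule idempotents_sym)

abbreviation theta where "theta l m \<equiv> Xt.eigval (At l) m"

lemma Rt_sym: "l \<le> 3 \<Longrightarrow> (Rt l)\<inverse> = Rt l"
  using symmetric unfolding symmetric_scheme_def by blast

lemma R34_disjoint: "R 3 \<inter> R 4 = {}"
  by (rule X.rel_disjoint) simp_all

lemma At3: "At 3 = A 3 + A 4"
  using adj_mat_Un[OF R34_disjoint] by (simp add: symmetrization_def)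

lemma At_eq_A: "l < 3 \<Longrightarrow> At l = A l"
  by (simp add: symmetrization_def)

lemma A4_transpose: "A 4 = transpose_mat (A 3)"
  by (simp flip: converse_R3 add: adj_mat_converse)

lemma A3_ne_A4: "A 3 \<noteq> A 4"
proof
  assume eq: "A 3 = A 4"
  obtain x y where xy: "(x, y) \<in> R 3" using X.rel_nonempty[of 3] by auto
  have "x < n" "y < n" using X.rel_in_range[OF _ xy] by auto
  hence "A 3 $$ (x, y) = A 4 $$ (x, y)" using eq by simp
  thus False using xy R34_disjoint \<open>x < n\<close> \<open>y < n\<close> by (auto split: if_splits)
qed

lemma Xt_BM_subset: "Y \<in> Xt.BM \<Longrightarrow> Y \<in> X.BM"
proof -
  assume Y: "Y \<in> Xt.BM"
  obtain c where c: "\<And>x y. x < n \<Longrightarrow> y < n \<Longrightarrow> Y $$ (x, y) = (\<Sum>i\<le>3. c i * Xt.rel_ind i x y)"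
    using Xt.BM_obtain_coeffs[OF Y] by blast
  show ?thesis
  proof (rule X.BM_I_classwise[where c = "\<lambda>k. c (min k 3)"])
    show "Y \<in> carrier_mat n n" using Xt.BM_carrier[OF Y] .
    fix k x y assume k: "k \<le> 4" "(x, y) \<in> R k"
    hence xy: "x < n" "y < n" using X.rel_in_range by auto
    have "(x, y) \<in> Rt (min k 3)"
    proof (cases "k \<le> 3")
      case True
      thus ?thesis using k(2) by (cases "k = 3") (simp_all add: symmetrization_def)
    next
      case False
      hence "k = 4" using k(1) by simp
      thus ?thesis using k(2) by (simp add: symmetrization_def)
    qed
    thus "Y $$ (x, y) = c (min k 3)" using c[OF xy] Xt.sum_rel_ind[OF xy] by simp
  qed
qed

lemma Et_BM: "m \<le> 3 \<Longrightarrow> Et m \<in> X.BM"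
  using Xt_BM_subset Xt.E_BM by blast

lemma Et_mult_E_cases:
  assumes m: "m \<le> 3" and j: "j \<le> 4"
  shows "Et m * E j = E j \<or> Et m * E j = 0\<^sub>m n n"
proof -
  let ?c = "X.eigval (Et m) j"
  have Ej: "E j \<in> carrier_mat n n" and Etm: "Et m \<in> carrier_mat n n"
    using X.E_carrier[OF j] Xt.E_carrier[OF m] .
  have "?c \<cdot>\<^sub>m E j = (Et m * Et m) * E j" using X.mult_E_eigval[OF Et_BM[OF m] j] Xt.E_idem[OF m] by simp
  also have "\<dots> = Et m * (?c \<cdot>\<^sub>m E j)" using X.mult_E_eigval[OF Et_BM[OF m] j] Etm Ej by simp
  also have "\<dots> = (?c * ?c) \<cdot>\<^sub>m E j"
    using X.mult_E_eigval[OF Et_BM[OF m] j] by (simp add: mult_smult_distrib[OF Etm Ej] smult_smult_mat)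
  finally have "?c * ?c = ?c" using smult_mat_cancel[OF Ej X.E_nonzero[OF j]] by metis
  hence "?c = 0 \<or> ?c = 1" by (metis mult_cancel_left2)
  moreover have "0 \<cdot>\<^sub>m E j = 0\<^sub>m n n" using Ej by (intro eq_matI) auto
  ultimately show ?thesis
    using X.mult_E_eigval[OF Et_BM[OF m] j] one_smult_mat[of "E j"] by (elim disjE) simp_all
qed

lemma Et_mult_E_ex:
  assumes j: "j \<le> 4"
  shows "\<exists>m\<le>3. Et m * E j = E j"
proof (rule ccontr)
  assume none: "\<not> ?thesis"
  have zero: "Et m * E j = 0\<^sub>m n n" if m: "m \<le> 3" for m
  proof -
    have "Et m * E j \<noteq> E j" using none m by blast
    thus ?thesis using Et_mult_E_cases[OF m j] by simp
  qed
  have "E j = 0\<^sub>m n n"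
  proof (rule eq_square_matI[OF X.E_carrier[OF j] zero_carrier_mat])
    fix x y assume xy: "x < n" "y < n"
    have "E j $$ (x, y) = (\<Sum>m\<le>3. (Et m * E j) $$ (x, y))"
      by (rule Xt.entry_sum_E_mult[OF X.E_carrier[OF j] xy])
    also have "\<dots> = 0" using zero xy by (intro sum.neutral) simp
    finally show "E j $$ (x, y) = 0\<^sub>m n n $$ (x, y)" using xy by simp
  qed
  thus False using X.E_nonzero[OF j] by simp
qed

lemma Et_mult_E_unique:
  assumes m: "m \<le> 3" "m' \<le> 3" and j: "j \<le> 4"
    and "Et m * E j = E j" "Et m' * E j = E j"
  shows "m = m'"
proof (rule ccontr)
  assume "m \<noteq> m'"
  have "E j = (Et m * Et m') * E j"
    using assms Xt.E_carrier X.E_carrier[OF j] by (simp add: assoc_mult_mat[of _ n n _ n _ n])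
  also have "\<dots> = 0\<^sub>m n n" using Xt.E_orth[OF m \<open>m \<noteq> m'\<close>] X.E_carrier[OF j] by simp
  finally show False using X.E_nonzero[OF j] by simp
qed

definition block :: "nat \<Rightarrow> nat" where
  "block j = (THE m. m \<le> 3 \<and> Et m * E j = E j)"

lemma block:
  assumes j: "j \<le> 4"
  shows "block j \<le> 3 \<and> Et (block j) * E j = E j"
proof -
  have "\<exists>!m. m \<le> 3 \<and> Et m * E j = E j" using Et_mult_E_ex[OF j] Et_mult_E_unique[OF _ _ j] by blast
  thus ?thesis unfolding block_def by (rule theI')
qed

lemma block_eqI: "m \<le> 3 \<Longrightarrow> j \<le> 4 \<Longrightarrow> Et m * E j = E j \<Longrightarrow> block j = m"
  using block Et_mult_E_unique by blast

lemma Et_mult_E: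
  assumes m: "m \<le> 3" and j: "j \<le> 4"
  shows "Et m * E j = (if block j = m then E j else 0\<^sub>m n n)"
proof (cases "block j = m")
  case True
  thus ?thesis using block[OF j] by simp
next
  case False
  hence "Et m * E j \<noteq> E j" using block_eqI[OF m j] by blast
  thus ?thesis using Et_mult_E_cases[OF m j] False by simp
qed

lemma block_surj:
  assumes m: "m \<le> 3"
  obtains j where "j \<le> 4" "block j = m"
proof -
  have "\<exists>j\<le>4. block j = m"
  proof (rule ccontr)
    assume none: "\<not> (\<exists>j\<le>4. block j = m)"
    have "Et m * E j = 0\<^sub>m n n * E j" if j: "j \<le> 4" for j
      using none j Et_mult_E[OF m j] X.E_carrier[OF j] by auto
    hence "Et m = 0\<^sub>m n n" by (rule X.eq_if_mult_E_eq[OF Xt.E_carrier[OF m] zero_carrier_mat])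
    thus False using Xt.E_nonzero[OF m] by simp
  qed
  thus thesis using that by blast
qed

lemma block_0: "block 0 = 0"
  using block_eqI[of 0 0] X.E_idem[of 0] Xt.E0 X.E0 by simp

lemma block_3_two:
  obtains k l where "k \<le> 4" "l \<le> 4" "k \<noteq> l" "block k = 3" "block l = 3"
proof -
  obtain k where k: "k \<le> 4" "block k = 3" using block_surj[of 3] by auto
  have "\<exists>l\<le>4. l \<noteq> k \<and> block l = 3"
  proof (rule ccontr)
    assume none: "\<not> (\<exists>l\<le>4. l \<noteq> k \<and> block l = 3)"
  have eq: "Et 3 * E j = E k * E j" if j: "j \<le> 4" for j
  proof (cases "j = k")
    case True
    thus ?thesis using Et_mult_E[OF _ j] k X.E_idem[OF j] by simp
  next
    case False
    hence "block j \<noteq> 3" using none that k by blast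
    thus ?thesis using Et_mult_E[OF _ j] X.E_orth[OF k(1) j] False by simp
  qed
  have "Et 3 = E k" by (rule X.eq_if_mult_E_eq[OF Xt.E_carrier[OF le_refl] X.E_carrier[OF k(1)] eq])
  moreover have "k \<noteq> 0" using k(2) block_0 by (metis zero_neq_numeral)
  ultimately show False using Et3_not_E k(1) by (auto simp: le_Suc_eq numeral_eq_Suc)
  qed
  thus thesis using that k by blast
qed

lemma block_fibres:
  obtains k l where "k \<le> 4" "l \<le> 4" "k \<noteq> l" "block k = 3" "block l = 3"
    and "\<And>j. j \<le> 4 \<Longrightarrow> block j = 3 \<Longrightarrow> j = k \<or> j = l"
    and "\<And>j j'. j \<le> 4 \<Longrightarrow> j' \<le> 4 \<Longrightarrow> block j = block j' \<Longrightarrow> block j < 3 \<Longrightarrow> j = j'"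
proof -
  obtain j0 where j0: "j0 \<le> 4" "block j0 = 0" using block_surj[of 0] by auto
  obtain j1 where j1: "j1 \<le> 4" "block j1 = 1" using block_surj[of 1] by auto
  obtain j2 where j2: "j2 \<le> 4" "block j2 = 2" using block_surj[of 2] by auto
  obtain k l where kl: "k \<le> 4" "l \<le> 4" "k \<noteq> l" "block k = 3" "block l = 3" using block_3_two by blast
  have "distinct [j0, j1, j2, k, l]" using j0 j1 j2 kl by auto
  hence "card {j0, j1, j2, k, l} = card {..4::nat}" by simp
  hence all: "{j0, j1, j2, k, l} = {..4}" using j0 j1 j2 kl by (intro card_subset_eq) auto
  have mem: "j \<in> {j0, j1, j2, k, l}" if "j \<le> 4" for j using all that by auto
  show thesis
  proof (rule that[OF kl])
    show "j = k \<or> j = l" if "j \<le> 4" "block j = 3" for j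
      using mem[OF that(1)] that(2) j0 j1 j2 by auto
    show "j = j'" if "j \<le> 4" "j' \<le> 4" "block j = block j'" "block j < 3" for j j'
      using mem[OF that(1)] mem[OF that(2)] that(3,4) j0 j1 j2 kl by auto
  qed
qed

lemma Et_symmetric: "m \<le> 3 \<Longrightarrow> transpose_mat (Et m) = Et m"
  using Xt.BM_symmetric[OF Rt_sym Xt.E_BM] by blast

lemma block_E_dual:
  assumes j: "j \<le> 4"
  shows "block (X.E_dual j) = block j"
proof -
  let ?m = "block j" and ?d = "X.E_dual j"
  have m: "?m \<le> 3" and d: "?d \<le> 4" using block[OF j] X.E_dual[OF j] by auto
  have "E ?d * Et ?m = transpose_mat (Et ?m * E j)"
    using X.E_dual[OF j] transpose_mult[OF Xt.E_carrier[OF m] X.E_carrier[OF j]] Et_symmetric[OF m] by simp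
  also have "\<dots> = E ?d" using block[OF j] X.E_dual[OF j] by simp
  finally have "Et ?m * E ?d = E ?d" using X.BM_mult_commute[OF X.E_BM[OF d] Et_BM[OF m]] by simp
  thus ?thesis by (rule block_eqI[OF m d])
qed

lemma E_dual_single:
  assumes j: "j \<le> 4" and single: "block j < 3"
  shows "X.E_dual j = j"
proof -
  obtain k l where uniq: "\<And>j j'. j \<le> 4 \<Longrightarrow> j' \<le> 4 \<Longrightarrow> block j = block j' \<Longrightarrow> block j < 3 \<Longrightarrow> j = j'"
    using block_fibres by metis
  show ?thesis using uniq[OF j _ _ single, of "X.E_dual j"] X.E_dual[OF j] block_E_dual[OF j] by simp
qed

lemma A_BM: "k \<le> 4 \<Longrightarrow> A k \<in> X.BM"
  by (rule X.adj_mat_BM)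

lemma eigval_A4: "j \<le> 4 \<Longrightarrow> X.eigval (A 4) j = cnj (X.eigval (A 3) j)"
  using X.eigval_transpose_adj[of 3 j] A4_transpose by simp

lemma eigval_A3_E_dual:
  assumes j: "j \<le> 4"
  shows "X.eigval (A 3) (X.E_dual j) = cnj (X.eigval (A 3) j)"
proof -
  have "cnj (X.eigval (A 3) (X.E_dual j)) = X.eigval (A 3) j"
    using X.eigval_transpose_E_dual[OF A_BM j] X.eigval_transpose_adj[of 3 "X.E_dual j"] X.E_dual[OF j]
    by simp
  thus ?thesis by (metis complex_cnj_cnj)
qed

text \<open>If the eigenvalues of A 3 were all real, its transpose A 4 would act on every E j as A 3 does.\<close>

lemma eigval_A3_block_3_nonreal:
  assumes j: "j \<le> 4" and "block j = 3"
  shows "cnj (X.eigval (A 3) j) \<noteq> X.eigval (A 3) j"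
proof
  assume real_j: "cnj (X.eigval (A 3) j) = X.eigval (A 3) j"
  obtain k l where fibre: "\<And>j. j \<le> 4 \<Longrightarrow> block j = 3 \<Longrightarrow> j = k \<or> j = l"
    using block_fibres by metis
  have real: "cnj (X.eigval (A 3) j') = X.eigval (A 3) j'" if j': "j' \<le> 4" for j'
  proof (cases "X.E_dual j' = j'")
    case True
    thus ?thesis using eigval_A3_E_dual[OF j'] by simp
  next
    case False
    have "block j' = 3" "block (X.E_dual j') = 3"
      using False E_dual_single[OF j'] block[OF j'] block_E_dual[OF j'] by fastforce+
    hence "j = j' \<or> j = X.E_dual j'"
      using fibre[OF j'] fibre[of "X.E_dual j'"] fibre[OF j \<open>block j = 3\<close>] X.E_dual[OF j'] False by auto
    thus ?thesis using real_j eigval_A3_E_dual[OF j'] by (metis complex_cnj_cnj)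
  qed
  have "A 3 = A 4"
  proof (rule X.eq_if_mult_E_eq[OF adj_mat_carrier adj_mat_carrier])
    fix j' :: nat assume j': "j' \<le> 4"
    show "A 3 * E j' = A 4 * E j'"
      using X.mult_E_eigval[OF A_BM j'] X.mult_E_eigval[OF A_BM j'] eigval_A4[OF j'] real[OF j'] by simp
  qed
  thus False using A3_ne_A4 by simp
qed

lemma E_dual_block_3: "j \<le> 4 \<Longrightarrow> block j = 3 \<Longrightarrow> X.E_dual j \<noteq> j"
  using eigval_A3_block_3_nonreal eigval_A3_E_dual by fastforce

lemma At_BM: "l \<le> 3 \<Longrightarrow> At l \<in> X.BM"
  using Xt_BM_subset Xt.adj_mat_BM by blast

lemma eigval_At_block:
  assumes l: "l \<le> 3" and j: "j \<le> 4"
  shows "X.eigval (At l) j = theta l (block j)"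
proof (rule X.eigval_eqI[OF At_BM[OF l] j])
  let ?m = "block j"
  have m: "?m \<le> 3" using block[OF j] by simp
  have "At l * E j = (At l * Et ?m) * E j"
    using block[OF j] Xt.E_carrier[OF m] X.E_carrier[OF j] by (simp add: assoc_mult_mat[of _ n n _ n _ n])
  also have "\<dots> = theta l ?m \<cdot>\<^sub>m (Et ?m * E j)"
    using Xt.mult_E_eigval[OF Xt.adj_mat_BM[OF l] m] by (simp add: mult_smult_assoc_mat[OF Xt.E_carrier[OF m] X.E_carrier[OF j]])
  finally show "At l * E j = theta l ?m \<cdot>\<^sub>m E j" using block[OF j] by simp
qed

lemma eigval_A3_single:
  assumes j: "j \<le> 4" and single: "block j < 3"
  shows "X.eigval (A 3) j = theta 3 (block j) / 2"
proof -
  have "theta 3 (block j) = X.eigval (A 3) j + X.eigval (A 4) j"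
    using eigval_At_block[of 3 j] X.eigval_add[OF A_BM A_BM j] j by (simp add: At3)
  also have "\<dots> = 2 * X.eigval (A 3) j"
    using eigval_A4[OF j] eigval_A3_E_dual[OF j] E_dual_single[OF j single] by simp
  finally show ?thesis by simp
qed

lemma theta_real:
  assumes "l \<le> 3" "m \<le> 3"
  shows "Im (theta l m) = 0"
proof -
  have "transpose_mat (At l) = At l" using Rt_sym[OF assms(1)] by (simp flip: adj_mat_converse)
  hence "theta l m = cnj (theta l m)" using Xt.eigval_transpose_adj[OF assms] by simp
  hence "Im (theta l m) = Im (cnj (theta l m))" by simp
  thus ?thesis by simp
qed

lemma Re_theta_le_valency: "l \<le> 3 \<Longrightarrow> m \<le> 3 \<Longrightarrow> Re (theta l m) \<le> valency n (Rt l)"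
  using Xt.norm_eigval_adj_le_valency complex_Re_le_cmod order_trans by blast

lemma theta_numbering:
  assumes i: "i \<in> {1, 2, 3}"
  shows "\<And>m m'. m \<in> {1, 2, 3} \<Longrightarrow> m' \<in> {1, 2, 3} \<Longrightarrow> m \<noteq> i \<Longrightarrow> m' \<noteq> i \<Longrightarrow> theta i m = theta i m'"
    and "\<And>m. m \<in> {1, 2, 3} \<Longrightarrow> m \<noteq> i \<Longrightarrow> theta i i \<noteq> theta i m"
proof -
  obtain a b where ab: "a \<noteq> b" "At i * Et i = b \<cdot>\<^sub>m Et i"
    and off: "\<And>m. m \<in> {1, 2, 3} \<Longrightarrow> m \<noteq> i \<Longrightarrow> At i * Et m = a \<cdot>\<^sub>m Et m"
    using numbering[OF i] by blast
  have il: "i \<le> 3" using i by auto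
  have "theta i i = b" using Xt.eigval_eqI[OF Xt.adj_mat_BM[OF il] il ab(2)] .
  moreover have "theta i m = a" if "m \<in> {1, 2, 3}" "m \<noteq> i" for m
    using Xt.eigval_eqI[OF Xt.adj_mat_BM[OF il] _ off[OF that]] that by auto
  ultimately show "\<And>m m'. m \<in> {1, 2, 3} \<Longrightarrow> m' \<in> {1, 2, 3} \<Longrightarrow> m \<noteq> i \<Longrightarrow> m' \<noteq> i \<Longrightarrow> theta i m = theta i m'"
    and "\<And>m. m \<in> {1, 2, 3} \<Longrightarrow> m \<noteq> i \<Longrightarrow> theta i i \<noteq> theta i m"
    using ab(1) by auto
qed

lemma theta_0: "l \<le> 3 \<Longrightarrow> theta l 0 = of_nat (valency n (Rt l))"
  by (rule Xt.eigval_adj_E0)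

lemma single_eigvals_12_distinct:
  assumes i: "i \<in> {1, 2}"
  shows "theta i 1 + theta 3 1 / 2 \<noteq> theta i 2 + theta 3 2 / 2"
proof -
  have "theta 3 1 = theta 3 2" by (rule theta_numbering(1)) simp_all
  moreover have "theta i 1 \<noteq> theta i 2"
  proof (cases "i = 1")
    case True
    thus ?thesis using theta_numbering(2)[of 1 2] by simp
  next
    case False
    hence "i = 2" using i by simp
    thus ?thesis using not_sym[OF theta_numbering(2)[of 2 1]] by simp
  qed
  ultimately show ?thesis by simp
qed

text \<open>Eigenvalues of a 0/1 matrix are bounded by its row sum, so equality with the trivial
  eigenvalue forces both theta i m and theta 3 m to be valencies.\<close>

lemma single_eigvals_0_distinct:
  assumes i: "i \<in> {1, 2}" and m: "m \<in> {1, 2}"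
  shows "theta i 0 + theta 3 0 / 2 \<noteq> theta i m + theta 3 m / 2"
proof
  assume eq: "theta i 0 + theta 3 0 / 2 = theta i m + theta 3 m / 2"
  have il: "i \<le> 3" and ml: "m \<le> 3" using i m by auto
  have "real (valency n (Rt i)) + real (valency n (Rt 3)) / 2 = Re (theta i m) + Re (theta 3 m) / 2"
    using arg_cong[OF eq, of Re] theta_0[OF il] theta_0[of 3] by simp
  moreover have "Re (theta i m) \<le> valency n (Rt i)" "Re (theta 3 m) \<le> valency n (Rt 3)"
    using Re_theta_le_valency il ml by auto
  ultimately have "Re (theta i m) = valency n (Rt i)" "Re (theta 3 m) = valency n (Rt 3)" by linarith+
  hence "theta i m = of_nat (valency n (Rt i))" "theta 3 m = of_nat (valency n (Rt 3))"
    using theta_real[OF il ml] theta_real[OF _ ml, of 3] by (simp_all add: complex_eq_iff)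
  thus False
    using Xt.amorphic_eigval_valency_unique[OF amorphic order_refl, of i 3 m] i m by auto
qed

lemma single_eigvals_distinct:
  assumes i: "i \<in> {1, 2}" and m: "m < 3" "m' < 3" "m \<noteq> m'"
  shows "theta i m + theta 3 m / 2 \<noteq> theta i m' + theta 3 m' / 2"
proof -
  have L: "theta i m + theta 3 m / 2 \<noteq> theta i m' + theta 3 m' / 2"
    if "m = 0 \<and> m' = 1 \<or> m = 0 \<and> m' = 2 \<or> m = 1 \<and> m' = 2" for m m'
    using that single_eigvals_12_distinct[OF i] single_eigvals_0_distinct[OF i, of 1]
      single_eigvals_0_distinct[OF i, of 2] by auto
  have "m = 0 \<and> m' = 1 \<or> m = 0 \<and> m' = 2 \<or> m = 1 \<and> m' = 2 \<or>
      m' = 0 \<and> m = 1 \<or> m' = 0 \<and> m = 2 \<or> m' = 1 \<and> m = 2"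
    using m by arith
  thus ?thesis using L[of m m'] L[of m' m] by metis
qed

lemma Im_eigval_single:
  assumes i: "i \<le> 3" and j: "j \<le> 4" "block j < 3"
  shows "Im (theta i (block j) + X.eigval (A 3) j) = 0"
proof -
  have "Im (X.eigval (A 3) j) = Im (theta 3 (block j)) / 2" unfolding eigval_A3_single[OF j] by simp
  thus ?thesis using theta_real[OF i, of "block j"] theta_real[of 3 "block j"] j by simp
qed

lemma Im_eigval_block_3:
  assumes i: "i \<le> 3" and j: "j \<le> 4" "block j = 3"
  shows "Im (theta i (block j) + X.eigval (A 3) j) \<noteq> 0"
  using eigval_A3_block_3_nonreal[OF j] theta_real[OF i, of 3] j(2) by (simp add: complex_eq_iff)

lemma eigval_sum_inj:
  assumes i: "i \<in> {1, 2}"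
  shows "inj_on (\<lambda>j. theta i (block j) + X.eigval (A 3) j) {..4}"
proof (rule inj_onI, rule ccontr)
  fix j j' assume j: "j \<in> {..4}" "j' \<in> {..4}" and ne: "j \<noteq> j'"
    and eq: "theta i (block j) + X.eigval (A 3) j = theta i (block j') + X.eigval (A 3) j'"
  have jl: "j \<le> 4" "j' \<le> 4" using j by auto
  obtain k l where fibre: "\<And>j. j \<le> 4 \<Longrightarrow> block j = 3 \<Longrightarrow> j = k \<or> j = l"
    and single: "\<And>j j'. j \<le> 4 \<Longrightarrow> j' \<le> 4 \<Longrightarrow> block j = block j' \<Longrightarrow> block j < 3 \<Longrightarrow> j = j'"
    using block_fibres by metis
  have b: "block j \<le> 3" "block j' \<le> 3" using block jl by auto
  have il: "i \<le> 3" using i by auto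
  consider "block j = 3" "block j' = 3" | "block j < 3" "block j' < 3"
    | "block j = 3" "block j' < 3" | "block j < 3" "block j' = 3"
    using b by linarith
  thus False
  proof cases
    case 1
    have "X.E_dual j \<le> 4" "block (X.E_dual j) = 3" "X.E_dual j \<noteq> j"
      using X.E_dual[OF jl(1)] block_E_dual[OF jl(1)] E_dual_block_3[OF jl(1)] 1 by auto
    hence "j' = X.E_dual j" using fibre jl 1 ne by metis
    hence "X.eigval (A 3) j = cnj (X.eigval (A 3) j)" using eq 1 eigval_A3_E_dual[OF jl(1)] by simp
    thus False using eigval_A3_block_3_nonreal[OF jl(1) 1(1)] by simp
  next
    case 2
    hence "block j \<noteq> block j'" using single jl ne by blast
    thus False using eq 2 single_eigvals_distinct[OF i 2] jl eigval_A3_single by simp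
  next
    case 3
    thus False using eq Im_eigval_block_3[OF il jl(1) 3(1)] Im_eigval_single[OF il jl(2) 3(2)] by simp
  next
    case 4
    thus False using eq Im_eigval_single[OF il jl(1) 4(1)] Im_eigval_block_3[OF il jl(2) 4(2)] by simp
  qed
qed

lemma card_eigenvalues:
  assumes i: "i \<in> {1, 2}"
  shows "card (Collect (eigenvalue (adj_mat n (R i \<union> R 3)))) = 5"
proof -
  have il: "i \<le> 4" "i < 3" "i \<noteq> 3" using i by auto
  have eig: "X.eigval (adj_mat n (R i \<union> R 3)) j = theta i (block j) + X.eigval (A 3) j"
    if "j \<in> {..4}" for j
    using X.eigval_adj_Un[OF il(1) _ il(3)] eigval_At_block[of i j] At_eq_A[OF il(2)] that il by simp
  have "adj_mat n (R i \<union> R 3) \<in> X.BM" using X.adj_mat_Un_BM[OF il(1) _ il(3)] by simp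
  hence "Collect (eigenvalue (adj_mat n (R i \<union> R 3))) = X.eigval (adj_mat n (R i \<union> R 3)) ` {..4}"
    by (rule X.eigenvalues_BM)
  also have "\<dots> = (\<lambda>j. theta i (block j) + X.eigval (A 3) j) ` {..4}" using eig by (rule image_cong[OF refl])
  finally show ?thesis using card_image[OF eigval_sum_inj[OF i]] by simp
qed

end

theorem proposition3p7:
  fixes n :: nat and R :: "nat \<Rightarrow> (nat \<times> nat) set"
    and E Et :: "nat \<Rightarrow> complex mat"
  assumes comm: "commutative_scheme n 4 R"
    and tr34: "(R 3)\<inverse> = R 4"
    and sym012: "\<forall>i\<le>2. (R i)\<inverse> = R i"
    and E: "prim_idempotents n 4 R E"
    and amor: "amorphic n 3 (symmetrization R)"
    and Et: "prim_idempotents n 3 (symmetrization R) Et"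
    and numbering: "\<forall>i\<in>{1,2,3}. \<exists>a b :: complex. a \<noteq> b \<and>
        adj_mat n (symmetrization R i) * Et 0
          = of_nat (valency n (symmetrization R i)) \<cdot>\<^sub>m Et 0 \<and>
        adj_mat n (symmetrization R i) * Et i = b \<cdot>\<^sub>m Et i \<and>
        (\<forall>j\<in>{1,2,3}. j \<noteq> i \<longrightarrow> adj_mat n (symmetrization R i) * Et j = a \<cdot>\<^sub>m Et j)"
    and notin: "Et 3 \<notin> {E 1, E 2, E 3, E 4}"
  shows "\<forall>i\<in>{1,2}. card (Collect (eigenvalue (adj_mat n (R i \<union> R 3)))) = 5"
proof -
  interpret amorphic_symmetrization n R E Et
  proof
    show "\<exists>a b. a \<noteq> b \<and> adj_mat n (symmetrization R i) * Et i = b \<cdot>\<^sub>m Et i \<and>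
        (\<forall>j\<in>{1, 2, 3}. j \<noteq> i \<longrightarrow> adj_mat n (symmetrization R i) * Et j = a \<cdot>\<^sub>m Et j)"
      if "i \<in> {1, 2, 3}" for i
      using numbering that by blast
  qed (fact comm tr34 E amor Et notin)+
  show ?thesis using card_eigenvalues by blast
qed

end
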